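(* Let $T_M,c>0$. Then there exists a solution $f\in C^{2,1/2}(\mathbb R_+)$, with $f>0$ in the interior of $\mathbb R_+$, of $$f''(y)-cf'(y)-f^4(y)=-\int_0^\infty E(y-\eta)f^4(\eta)\,d\eta\ \ (y>0),\qquad f(0)=T_M,\qquad f\ge0.$$ Moreover, $f$ is the limit of a monotone increasing bounded sequence $0\le f_1\le f_2\le\dots\le f_n\le f_{n+1}\le\dots\le T_M$ with $f_n\in C^{2,1/2}(\mathbb R_+)$, $\|f_n\|_{2,1/2}$ uniformly bounded and $f_n>0$ in the interior of $\mathbb R_+$, solving the recursive system $$f_{n+1}''-cf_{n+1}'-f_{n+1}^4=-\int_0^\infty E(y-\eta)f_n^4(\eta)\,d\eta\ \ (y>0,\ n\ge0),\qquad f_0=0,\qquad f_{n+1}(0)=T_M,\qquad f_{n+1}\ge0.$$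
   Context: $E(x)=\frac12E_1(x)=\frac12\int_{|x|}^\infty\frac{e^{-t}}{t}dt$. $\mathbb R_+=[0,\infty)$. $C^{k,\beta}(U)$ denotes $k$ times continuously differentiable functions with finite norm $\|f\|_{k,\beta}=\max_{0\le j\le k}\sup_U|\partial^jf|+\sup_{x\ne y}\frac{|\partial^kf(x)-\partial^kf(y)|}{|x-y|^\beta}$. *)

theory Defs
  imports "HOL-Analysis.Analysis"
begin

definition E1 :: "real \<Rightarrow> real" where
  "E1 x = integral {\<bar>x\<bar>..} (\<lambda>t. exp (- t) / t)"

definition E :: "real \<Rightarrow> real" where
  "E x = E1 x / 2"

text \<open>C2h f f1 f2 K: f is twice continuously differentiable on R_+ = [0,oo)
  (one-sided derivatives at 0), with first derivative f1 and second derivative f2,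
  and all parts of the C^{2,1/2}(R_+) norm are bounded by K:
  sup|f|, sup|f'|, sup|f''| <= K and the 1/2-Hoelder seminorm of f'' is <= K.
  Hence ||f||_{2,1/2} <= 2K, and ||f||_{2,1/2} <= K implies C2h f f1 f2 K.\<close>
definition C2h :: "(real \<Rightarrow> real) \<Rightarrow> (real \<Rightarrow> real) \<Rightarrow> (real \<Rightarrow> real) \<Rightarrow> real \<Rightarrow> bool" where
  "C2h f f1 f2 K \<longleftrightarrow>
     (\<forall>x\<ge>0. (f has_real_derivative f1 x) (at x within {0..})) \<and>
     (\<forall>x\<ge>0. (f1 has_real_derivative f2 x) (at x within {0..})) \<and>
     continuous_on {0..} f2 \<and>
     (\<forall>x\<ge>0. \<bar>f x\<bar> \<le> K \<and> \<bar>f1 x\<bar> \<le> K \<and> \<bar>f2 x\<bar> \<le> K) \<and>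
     (\<forall>x\<ge>0. \<forall>y\<ge>0. \<bar>f2 x - f2 y\<bar> \<le> K * sqrt \<bar>x - y\<bar>)"

end

theory Submission
  imports Defs "HOL-Real_Asymp.Real_Asymp"
begin

text \<open>
  Two nested monotone iterations. For M >= 4 T_M^3 the equation f'' - c f' - f^4 = -g reads
  f'' - c f' - M f = -(g + M f - f^4), whose right-hand side is increasing in f on [0, T_M].
  The bounded solution of the linear problem with f(0) = T_M (variation of constants) depends
  monotonically on the source and lies between T_M e^(r2 y) and T_M when 0 <= source <= M T_M.
  Hence for every source 0 <= g <= T_M^4 the Picard iteration from 0 increases to a solution,
  and since E >= 0 the outer iteration with g = int_0^oo E(y - eta) f_n(eta)^4 d eta increases
  as well; limits pass through both iterations by dominated convergence. The C^(2,1/2) bounds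
  are uniform because f'' = c f' + f^4 - g and g is 1/2-Hoelder, the primitive of E being
  O(x + sqrt x) near 0.
\<close>

lemma has_integral_Icc_Ici:
  fixes f :: "real \<Rightarrow> real"
  assumes "a \<le> b" "(f has_integral i) {a..b}" "(f has_integral j) {b..}"
  shows "(f has_integral (i + j)) {a..}"
proof -
  have "{a..b} \<inter> {b..} = {b}" "{a..b} \<union> {b..} = {a..}"
    using assms(1) by auto
  then show ?thesis
    using has_integral_Un[OF assms(2,3)] by simp
qed

lemma E1_minus [simp]: "E1 (- x) = E1 x"
  by (simp add: E1_def)

lemma E1_abs [simp]: "E1 \<bar>x\<bar> = E1 x"
  by (simp add: E1_def)

lemma E_minus [simp]: "E (- x) = E x"
  by (simp add: E_def)

lemma E_minus_commute: "E (x - y) = E (y - x)"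
  by (metis E_minus minus_diff_eq)

lemma continuous_on_E1_integrand: "0 < a \<Longrightarrow> continuous_on {a..b} (\<lambda>t::real. exp (- t) / t)"
  by (auto intro!: continuous_intros)

lemma E1_has_integral:
  assumes "x > 0"
  shows "((\<lambda>t. exp (- t) / t) has_integral E1 x) {x..}"
proof -
  have "(\<lambda>t. exp (- t) / t) integrable_on {x..}"
  proof (rule measurable_bounded_by_integrable_imp_integrable)
    show "(\<lambda>t. exp (- t) / t) \<in> borel_measurable (lebesgue_on {x..})"
      using assms by (intro continuous_imp_measurable_on_sets_lebesgue) (auto intro!: continuous_intros)
    show "(\<lambda>t. exp (- 1 * t) / x) integrable_on {x..}"
      using has_integral_divide[OF has_integral_exp_minus_to_infinity[of 1 x], of x]
      unfolding integrable_on_def by auto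
    show "norm (exp (- t) / t) \<le> exp (- 1 * t) / x" if "t \<in> {x..}" for t
      using that assms by (auto simp: divide_simps intro!: mult_left_mono)
  qed auto
  then show ?thesis
    using assms by (simp add: E1_def integrable_integral)
qed

lemma E1_nonneg: "E1 x \<ge> 0"
proof (cases "(\<lambda>t. exp (- t) / t) integrable_on {\<bar>x\<bar>..}")
  case True
  then show ?thesis
    unfolding E1_def by (intro integral_nonneg) auto
qed (simp add: E1_def not_integrable_integral)

lemma E_nonneg: "E x \<ge> 0"
  using E1_nonneg[of x] by (simp add: E_def)

lemma mult_E1_le_exp:
  assumes "x \<ge> 0"
  shows "x * E1 x \<le> exp (- x)"
proof (cases "x = 0")
  case False
  with assms have "x > 0" by simp
  have "E1 x \<le> exp (- 1 * x) / 1 / x"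
    using has_integral_le[OF E1_has_integral[OF \<open>x > 0\<close>]
        has_integral_divide[OF has_integral_exp_minus_to_infinity[of 1 x], of x]] \<open>x > 0\<close>
    by (auto simp: divide_simps intro!: mult_left_mono)
  then show ?thesis
    using \<open>x > 0\<close> by (simp add: field_simps)
qed simp

lemma E1_le_sqrt:
  assumes "x > 0"
  shows "E1 x \<le> 2 / sqrt x"
proof -
  have "((\<lambda>t. t powr (-3/2)) has_integral - (x powr (-3/2 + 1)) / (-3/2 + 1)) {x..}"
    using assms by (intro has_integral_powr_to_inf) auto
  moreover have "- (x powr (-3/2 + 1)) / (-3/2 + 1) = 2 / sqrt x"
    using assms by (simp add: powr_minus powr_half_sqrt[symmetric] field_simps)
  moreover have "exp (- t) / t \<le> t powr (-3/2)" if "t \<in> {x..}" for t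
  proof -
    have t: "t > 0" using that assms by simp
    have "sqrt t \<le> 1 + t"
      using t by (intro real_le_lsqrt) (auto simp: power2_eq_square algebra_simps)
    also have "\<dots> \<le> exp t" by (rule exp_ge_add_one_self)
    finally have "exp (- t) * sqrt t \<le> 1"
      by (simp add: exp_minus field_simps)
    then have "exp (- t) / t \<le> 1 / (t * sqrt t)"
      using t by (simp add: field_simps)
    also have "\<dots> = t powr (-3/2)"
    proof -
      have "t powr (3/2) = t powr 1 * t powr (1/2)"
        using powr_add[of t 1 "1/2"] t by simp
      then show ?thesis
        using t by (simp add: powr_minus powr_half_sqrt field_simps)
    qed
    finally show ?thesis .
  qed
  ultimately show ?thesis
    using has_integral_le[OF E1_has_integral[OF assms]] by auto
qed

lemma E1_split:
  assumes "0 < a" "a \<le> y"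
  shows "E1 a = integral {a..y} (\<lambda>t. exp (- t) / t) + E1 y"
proof -
  have "((\<lambda>t. exp (- t) / t) has_integral integral {a..y} (\<lambda>t. exp (- t) / t)) {a..y}"
    using assms by (intro integrable_integral integrable_continuous_interval continuous_on_E1_integrand)
  from has_integral_Icc_Ici[OF assms(2) this E1_has_integral] assms
  show ?thesis
    using E1_has_integral[OF assms(1)] by (metis has_integral_unique order.strict_trans2)
qed

lemma E1_has_derivative:
  assumes "x > 0"
  shows "(E1 has_real_derivative - (exp (- x) / x)) (at x)"
proof -
  define a where "a = x / 2"
  have a: "0 < a" "a < x"
    using assms by (auto simp: a_def)
  have "((\<lambda>y. integral {a..y} (\<lambda>t. exp (- t) / t)) has_real_derivative exp (- x) / x)
      (at x within {a..x+1})"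
    using a by (intro integral_has_real_derivative continuous_on_E1_integrand) auto
  then have d: "((\<lambda>y. E1 a - integral {a..y} (\<lambda>t. exp (- t) / t)) has_real_derivative - (exp (- x) / x)) (at x)"
    using a at_within_Icc_at[of a x "x+1"] by (auto intro!: derivative_eq_intros)
  have "E1 a - integral {a..y} (\<lambda>t. exp (- t) / t) = E1 y" if "y \<in> {a<..}" for y
    using E1_split[OF a(1), of y] that by simp
  then show ?thesis
    using a by (intro has_field_derivative_transform_within_open[where S = "{a<..}", OF d]) auto
qed

lemma E1_antimono:
  assumes "0 < a" "a \<le> b"
  shows "E1 b \<le> E1 a"
proof -
  have "integral {a..b} (\<lambda>t. exp (- t) / t) \<ge> 0"
    using assms by (intro integral_nonneg integrable_continuous_interval continuous_on_E1_integrand) auto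
  then show ?thesis
    using E1_split[OF assms] by simp
qed

lemma E_antimono:
  assumes "0 < \<bar>u\<bar>" \<comment> \<open>\<open>E 0 = 0\<close> is a junk value: the integral defining \<open>E1 0\<close> diverges\<close> "\<bar>u\<bar> \<le> \<bar>v\<bar>"
  shows "E v \<le> E u"
  using E1_antimono[OF assms] by (simp add: E_def)

text \<open>The odd primitive of \<open>E\<close>; for \<open>x \<ge> 0\<close> it is \<open>\<integral>\<^sub>0\<^sup>x E\<close>, and \<open>\<integral>\<^sub>\<real> E = 1\<close>.\<close>

definition E_prim :: "real \<Rightarrow> real" where
  "E_prim x = sgn x * (1 - exp (- \<bar>x\<bar>) + \<bar>x\<bar> * E1 x) / 2"

lemma E_prim_minus: "E_prim (- x) = - E_prim x"
  by (simp add: E_prim_def)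

lemma E_prim_nonneg_eq:
  assumes "x \<ge> 0"
  shows "E_prim x = (1 - exp (- x) + x * E1 x) / 2"
  using assms by (cases "x = 0") (auto simp: E_prim_def)

lemma E_prim_has_derivative:
  assumes "x \<noteq> 0"
  shows "(E_prim has_real_derivative E x) (at x)"
proof -
  have pos: "(E_prim has_real_derivative E y) (at y)" if "y > 0" for y
  proof -
    have "((\<lambda>y. (1 - exp (- y) + y * E1 y) / 2) has_real_derivative
        (exp (- y) + (E1 y + y * - (exp (- y) / y))) / 2) (at y)"
      using that by (auto intro!: derivative_eq_intros E1_has_derivative)
    then have "((\<lambda>y. (1 - exp (- y) + y * E1 y) / 2) has_real_derivative E y) (at y)"
      using that by (simp add: E_def)
    then show ?thesis
      by (rule has_field_derivative_transform_within_open[where S = "{0<..}"])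
         (use that in \<open>auto simp: E_prim_nonneg_eq\<close>)
  qed
  show ?thesis
  proof (cases "x > 0")
    case False
    with assms have "- x > 0" by simp
    have "E_prim = (\<lambda>y. - E_prim (- y))"
      by (simp add: E_prim_minus)
    moreover have "((\<lambda>y. - E_prim (- y)) has_real_derivative - (E (- x) * - 1)) (at x)"
      using \<open>- x > 0\<close> by (auto intro!: derivative_eq_intros DERIV_chain2[OF pos])
    ultimately show ?thesis by simp
  qed (rule pos)
qed

lemma E_prim_nonneg_bounds:
  assumes "x \<ge> 0"
  shows "0 \<le> E_prim x" "E_prim x \<le> 1/2"
  using assms mult_E1_le_exp[OF assms] mult_nonneg_nonneg[OF assms E1_nonneg[of x]]
  by (auto simp: E_prim_nonneg_eq)

lemma abs_E_prim: "\<bar>E_prim x\<bar> = E_prim \<bar>x\<bar>"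
  using E_prim_nonneg_bounds(1)[of "\<bar>x\<bar>"] E_prim_minus[of x]
  by (cases "x \<ge> 0") auto

lemma abs_E_prim_le_half: "\<bar>E_prim x\<bar> \<le> 1/2"
  unfolding abs_E_prim by (rule E_prim_nonneg_bounds) simp

lemma abs_E_prim_le_sqrt: "\<bar>E_prim x\<bar> \<le> (\<bar>x\<bar> + 2 * sqrt \<bar>x\<bar>) / 2"
proof -
  have pos: "E_prim y \<le> (y + 2 * sqrt y) / 2" if "y > 0" for y
  proof -
    have "1 - exp (- y) \<le> y"
      using exp_ge_add_one_self[of "- y"] by simp
    moreover have "y * E1 y \<le> y * (2 / sqrt y)"
      using E1_le_sqrt[OF that] that by (intro mult_left_mono) auto
    moreover have "y * (2 / sqrt y) = 2 * sqrt y"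
      using that by (simp add: field_simps)
    ultimately show ?thesis
      using that by (simp add: E_prim_nonneg_eq)
  qed
  show ?thesis
    unfolding abs_E_prim using pos[of "\<bar>x\<bar>"] by (cases "x = 0") (simp_all add: E_prim_def)
qed

lemma isCont_E_prim: "isCont E_prim x"
proof (cases "x = 0")
  case True
  have "((\<lambda>x. (\<bar>x\<bar> + 2 * sqrt \<bar>x\<bar>) / 2) \<longlongrightarrow> (\<bar>0\<bar> + 2 * sqrt \<bar>0\<bar>) / 2) (at (0::real))"
    by (intro tendsto_intros) auto
  then have bound: "((\<lambda>x. (\<bar>x\<bar> + 2 * sqrt \<bar>x\<bar>) / 2) \<longlongrightarrow> 0) (at (0::real))"
    by simp
  have "norm (E_prim x) \<le> norm ((\<bar>x\<bar> + 2 * sqrt \<bar>x\<bar>) / 2) * 1" for x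
    using abs_E_prim_le_sqrt[of x] by simp
  then have "(E_prim \<longlongrightarrow> 0) (at 0)"
    by (intro tendsto_0_le[OF bound, of _ 1] always_eventually) auto
  moreover have "E_prim 0 = 0"
    by (simp add: E_prim_def)
  ultimately show ?thesis
    using True by (simp add: isCont_def)
qed (auto intro: DERIV_isCont E_prim_has_derivative)

lemma E_prim_tendsto_at_top: "(E_prim \<longlongrightarrow> 1/2) at_top"
proof -
  have "((\<lambda>x. (1 - exp (- x) + x * E1 x) / 2) \<longlongrightarrow> 1/2) at_top"
  proof (rule tendsto_sandwich)
    show "\<forall>\<^sub>F x in at_top. (1 - exp (- x)) / 2 \<le> (1 - exp (- x) + x * E1 x) / 2"
      by (rule eventually_at_top_linorderI[of 0]) (simp add: E1_nonneg)
    show "\<forall>\<^sub>F x in at_top. (1 - exp (- x) + x * E1 x) / 2 \<le> (1 - exp (- x) + exp (- x)) / 2"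
      by (rule eventually_at_top_linorderI[of 0]) (simp add: mult_E1_le_exp)
    show "((\<lambda>x::real. (1 - exp (- x)) / 2) \<longlongrightarrow> 1/2) at_top"
      by real_asymp
  qed simp
  moreover have "\<forall>\<^sub>F x in at_top. (1 - exp (- x) + x * E1 x) / 2 = E_prim x"
    by (rule eventually_at_top_linorderI[of 0]) (simp add: E_prim_nonneg_eq)
  ultimately show ?thesis
    by (rule Lim_transform_eventually)
qed

lemma continuous_on_E_prim: "continuous_on S E_prim"
  by (simp add: isCont_E_prim continuous_at_imp_continuous_on)

lemma E_has_integral_Icc:
  assumes "a \<le> b"
  shows "((\<lambda>\<eta>. E (\<eta> - s)) has_integral (E_prim (b - s) - E_prim (a - s))) {a..b}"
proof (rule fundamental_theorem_of_calculus_interior_strong[where S = "{s}" and f = "\<lambda>\<eta>. E_prim (\<eta> - s)"])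
  show "continuous_on {a..b} (\<lambda>\<eta>. E_prim (\<eta> - s))"
    by (intro continuous_on_compose2[OF continuous_on_E_prim[of UNIV]] continuous_intros) auto
  fix x
  assume "x \<in> {a<..<b} - {s}"
  then have d: "(E_prim has_real_derivative E (x - s)) (at (x - s))"
    by (intro E_prim_has_derivative) auto
  have "((\<lambda>\<eta>. \<eta> - s) has_real_derivative 1) (at x)"
    by (auto intro!: derivative_eq_intros)
  from DERIV_chain2[OF d this]
  show "((\<lambda>\<eta>. E_prim (\<eta> - s)) has_vector_derivative E (x - s)) (at x)"
    unfolding has_real_derivative_iff_has_vector_derivative[symmetric] by simp
qed (use assms in auto)

lemma E_prim_mono:
  assumes "a \<le> b"
  shows "E_prim a \<le> E_prim b"
  using has_integral_nonneg[OF E_has_integral_Icc[OF assms, of 0] E_nonneg] by simp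

lemma E_has_integral_Ici: "((\<lambda>\<eta>. E (\<eta> - s)) has_integral (1/2 - E_prim (a - s))) {a..}"
proof (rule has_integral_to_inf)
  show "(\<lambda>\<eta>. E (\<eta> - s)) integrable_on {a..y}" for y
    by (cases "a \<le> y") (use E_has_integral_Icc in auto)
  have "filterlim (\<lambda>y::real. y - s) at_top at_top"
    by real_asymp
  then have "((\<lambda>y. E_prim (y - s) - E_prim (a - s)) \<longlongrightarrow> 1/2 - E_prim (a - s)) at_top"
    by (intro tendsto_intros filterlim_compose[OF E_prim_tendsto_at_top])
  moreover have "\<forall>\<^sub>F y in at_top. integral {a..y} (\<lambda>\<eta>. E (\<eta> - s)) = E_prim (y - s) - E_prim (a - s)"
    by (rule eventually_at_top_linorderI[of a]) (use E_has_integral_Icc in blast)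
  ultimately show "((\<lambda>y. integral {a..y} (\<lambda>\<eta>. E (\<eta> - s))) \<longlongrightarrow> 1/2 - E_prim (a - s)) at_top"
    by (simp add: tendsto_cong)
qed (rule E_nonneg)

lemma E_kernel_has_integral: "((\<lambda>\<eta>. E (y - \<eta>)) has_integral (1/2 + E_prim y)) {0..}"
  using E_has_integral_Ici[of y 0] by (simp add: E_minus_commute E_prim_minus)

definition cont_bounded :: "real \<Rightarrow> (real \<Rightarrow> real) \<Rightarrow> bool" where
  "cont_bounded B h \<longleftrightarrow> continuous_on {0..} h \<and> (\<forall>x\<ge>0. \<bar>h x\<bar> \<le> B)"

lemma cont_boundedD:
  assumes "cont_bounded B h"
  shows "continuous_on {0..} h" "x \<ge> 0 \<Longrightarrow> \<bar>h x\<bar> \<le> B" "0 \<le> B"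
  using assms by (auto simp: cont_bounded_def intro: order_trans[OF abs_ge_zero])

definition E_conv :: "(real \<Rightarrow> real) \<Rightarrow> real \<Rightarrow> real" where
  "E_conv \<phi> y = integral {0..} (\<lambda>\<eta>. E (y - \<eta>) * \<phi> \<eta>)"

lemma E_conv_integrable:
  assumes "cont_bounded B \<phi>"
  shows "(\<lambda>\<eta>. E (y - \<eta>) * \<phi> \<eta>) integrable_on {0..}"
proof (rule measurable_bounded_by_integrable_imp_integrable)
  have kernel: "(\<lambda>\<eta>. E (y - \<eta>)) \<in> borel_measurable (lebesgue_on {0..})"
    using E_kernel_has_integral[of y] by (intro integrable_imp_measurable) (auto simp: integrable_on_def)
  show "(\<lambda>\<eta>. E (y - \<eta>) * \<phi> \<eta>) \<in> borel_measurable (lebesgue_on {0..})"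
    using cont_boundedD(1)[OF assms]
    by (intro borel_measurable_times[OF kernel] continuous_imp_measurable_on_sets_lebesgue) auto
  show "(\<lambda>\<eta>. B * E (y - \<eta>)) integrable_on {0..}"
    using has_integral_mult_right[OF E_kernel_has_integral[of y], of B] by (auto simp: integrable_on_def)
  show "norm (E (y - \<eta>) * \<phi> \<eta>) \<le> B * E (y - \<eta>)" if "\<eta> \<in> {0..}" for \<eta>
    using cont_boundedD(2)[OF assms, of \<eta>] that E_nonneg[of "y - \<eta>"]
    by (auto simp: abs_mult mult.commute[of B] intro!: mult_left_mono)
qed auto

lemma E_conv_has_integral:
  assumes "cont_bounded B \<phi>"
  shows "((\<lambda>\<eta>. E (y - \<eta>) * \<phi> \<eta>) has_integral E_conv \<phi> y) {0..}"
  unfolding E_conv_def using E_conv_integrable[OF assms] by (rule integrable_integral)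

lemma E_conv_bounds:
  assumes "continuous_on {0..} \<phi>" "\<And>x. x \<ge> 0 \<Longrightarrow> 0 \<le> \<phi> x \<and> \<phi> x \<le> B"
  shows "0 \<le> E_conv \<phi> y" "E_conv \<phi> y \<le> B"
proof -
  have B: "B \<ge> 0"
    using assms(2)[of 0] by auto
  have \<phi>: "cont_bounded B \<phi>"
    using assms by (auto simp: cont_bounded_def)
  show "0 \<le> E_conv \<phi> y"
    using has_integral_nonneg[OF E_conv_has_integral[OF \<phi>]] assms(2) E_nonneg by auto
  have "E_conv \<phi> y \<le> B * (1/2 + E_prim y)"
    using assms(2) E_nonneg
    by (intro has_integral_le[OF E_conv_has_integral[OF \<phi>] has_integral_mult_right[OF E_kernel_has_integral]])
       (auto simp: mult.commute[of B] intro!: mult_left_mono)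
  also have "\<dots> \<le> B"
    using abs_E_prim_le_half[of y] B by (auto intro: mult_left_le)
  finally show "E_conv \<phi> y \<le> B" .
qed

lemma E_conv_mono:
  assumes "cont_bounded B \<phi>" "cont_bounded B \<psi>" "\<And>x. x \<ge> 0 \<Longrightarrow> \<phi> x \<le> \<psi> x"
  shows "E_conv \<phi> y \<le> E_conv \<psi> y"
  using assms(3) E_nonneg
  by (intro has_integral_le[OF E_conv_has_integral[OF assms(1)] E_conv_has_integral[OF assms(2)]])
     (auto intro!: mult_left_mono)

lemma E_conv_tendsto:
  assumes "\<And>n. cont_bounded B (\<phi>s n)" "\<And>x. x \<ge> 0 \<Longrightarrow> (\<lambda>n. \<phi>s n x) \<longlonglongrightarrow> \<phi> x"
  shows "(\<lambda>n. E_conv (\<phi>s n) y) \<longlonglongrightarrow> E_conv \<phi> y"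
  unfolding E_conv_def
proof (rule dominated_convergence(2))
  show "(\<lambda>\<eta>. E (y - \<eta>) * \<phi>s n \<eta>) integrable_on {0..}" for n
    by (rule E_conv_integrable[OF assms(1)])
  show "(\<lambda>\<eta>. B * E (y - \<eta>)) integrable_on {0..}"
    using has_integral_mult_right[OF E_kernel_has_integral[of y], of B] by (auto simp: integrable_on_def)
  show "norm (E (y - \<eta>) * \<phi>s n \<eta>) \<le> B * E (y - \<eta>)" if "\<eta> \<in> {0..}" for n \<eta>
    using cont_boundedD(2)[OF assms(1), of \<eta> n] that E_nonneg[of "y - \<eta>"]
    by (auto simp: abs_mult mult.commute[of B] intro!: mult_left_mono)
  show "(\<lambda>n. E (y - \<eta>) * \<phi>s n \<eta>) \<longlonglongrightarrow> E (y - \<eta>) * \<phi> \<eta>" if "\<eta> \<in> {0..}" for \<eta>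
    using assms(2)[of \<eta>] that by (auto intro!: tendsto_intros)
qed

lemma has_integral_le_except:
  fixes f g :: "real \<Rightarrow> real"
  assumes "(f has_integral i) S" "(g has_integral j) S" "negligible N"
    and "\<And>x. x \<in> S - N \<Longrightarrow> f x \<le> g x"
  shows "i \<le> j"
proof -
  have "((\<lambda>x. if x \<in> N then 0 else f x) has_integral i) S"
    by (rule has_integral_spike[OF assms(3) _ assms(1)]) auto
  moreover have "((\<lambda>x. if x \<in> N then 0 else g x) has_integral j) S"
    by (rule has_integral_spike[OF assms(3) _ assms(2)]) auto
  ultimately show ?thesis
    by (rule has_integral_le) (use assms(4) in auto)
qed

lemma E_le_if_closer:
  assumes "\<bar>a - \<eta>\<bar> \<le> \<bar>b - \<eta>\<bar>" "\<eta> \<noteq> a"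
  shows "E (b - \<eta>) \<le> E (a - \<eta>)"
  using assms by (intro E_antimono) auto

lemma mult_le_sign_part:
  fixes k \<phi> B :: real
  assumes "0 \<le> \<phi>" "\<phi> \<le> B" "P \<Longrightarrow> 0 \<le> k" "\<not> P \<Longrightarrow> k \<le> 0"
  shows "k * \<phi> \<le> (if P then B * k else 0)"
  using assms by (cases P) (auto simp: mult.commute intro: mult_right_mono mult_nonneg_nonpos)

text \<open>For \<open>y < y'\<close> the kernel difference \<open>E (y - \<eta>) - E (y' - \<eta>)\<close> is nonnegative left of the
  midpoint and nonpositive right of it; integrating each sign part of it against \<open>0 \<le> \<phi> \<le> B\<close>
  bounds the two one-sided differences.\<close>

lemma E_conv_decrease_le:
  assumes "continuous_on {0..} \<phi>" "\<And>x. x \<ge> 0 \<Longrightarrow> 0 \<le> \<phi> x \<and> \<phi> x \<le> B"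
    and "0 \<le> y" "y < y'"
  shows "E_conv \<phi> y - E_conv \<phi> y' \<le> 2 * B * E_prim ((y' - y) / 2)"
proof -
  define m where "m = (y + y') / 2"
  have \<phi>: "cont_bounded B \<phi>"
    using assms(1,2) by (fastforce simp: cont_bounded_def)
  have mid: "m - y = (y' - y) / 2" "m - y' = - ((y' - y) / 2)"
    by (simp_all add: m_def field_simps)
  have "((\<lambda>\<eta>. E (\<eta> - y) - E (\<eta> - y')) has_integral
      (E_prim (m - y) - E_prim (0 - y)) - (E_prim (m - y') - E_prim (0 - y'))) {0..m}"
    using assms(3,4) by (intro has_integral_diff E_has_integral_Icc) (auto simp: m_def)
  then have "((\<lambda>\<eta>. E (\<eta> - y) - E (\<eta> - y')) has_integral
      2 * E_prim ((y' - y) / 2) + E_prim y - E_prim y') {0..m}"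
    unfolding mid by (simp add: E_prim_minus algebra_simps)
  then have "((\<lambda>\<eta>. if \<eta> \<in> {0..m} then B * (E (\<eta> - y) - E (\<eta> - y')) else 0) has_integral
      B * (2 * E_prim ((y' - y) / 2) + E_prim y - E_prim y')) {0..}"
    using assms(3,4) by (subst has_integral_restrict) (auto intro: has_integral_mult_right simp: m_def)
  then have "E_conv \<phi> y - E_conv \<phi> y' \<le> B * (2 * E_prim ((y' - y) / 2) + E_prim y - E_prim y')"
  proof (rule has_integral_le_except[OF has_integral_diff[OF E_conv_has_integral[OF \<phi>]
          E_conv_has_integral[OF \<phi>]] _ negligible_finite[of "{y, y'}"]])
    show "finite {y, y'}" by simp
    fix \<eta>
    assume \<eta>: "\<eta> \<in> {0..} - {y, y'}"
    then have "\<eta> \<le> m \<Longrightarrow> E (y' - \<eta>) \<le> E (y - \<eta>)" "\<not> \<eta> \<le> m \<Longrightarrow> E (y - \<eta>) \<le> E (y' - \<eta>)"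
      using assms(4) by (auto intro!: E_le_if_closer simp: m_def)
    then have "(E (y - \<eta>) - E (y' - \<eta>)) * \<phi> \<eta> \<le> (if \<eta> \<le> m then B * (E (y - \<eta>) - E (y' - \<eta>)) else 0)"
      using assms(2)[of \<eta>] \<eta> by (intro mult_le_sign_part) auto
    then show "E (y - \<eta>) * \<phi> \<eta> - E (y' - \<eta>) * \<phi> \<eta>
        \<le> (if \<eta> \<in> {0..m} then B * (E (\<eta> - y) - E (\<eta> - y')) else 0)"
      using \<eta> by (auto simp: E_minus_commute[of \<eta>] left_diff_distrib split: if_splits)
  qed
  also have "\<dots> \<le> 2 * B * E_prim ((y' - y) / 2)"
    using E_prim_mono[of y y'] assms(2)[of 0] assms(4) by (auto intro: mult_left_mono simp: algebra_simps)
  finally show ?thesis .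
qed

lemma E_conv_increase_le:
  assumes "continuous_on {0..} \<phi>" "\<And>x. x \<ge> 0 \<Longrightarrow> 0 \<le> \<phi> x \<and> \<phi> x \<le> B"
    and "0 \<le> y" "y < y'"
  shows "E_conv \<phi> y' - E_conv \<phi> y \<le> 2 * B * E_prim ((y' - y) / 2)"
proof -
  define m where "m = (y + y') / 2"
  have \<phi>: "cont_bounded B \<phi>"
    using assms(1,2) by (fastforce simp: cont_bounded_def)
  have mid: "m - y = (y' - y) / 2" "m - y' = - ((y' - y) / 2)"
    by (simp_all add: m_def field_simps)
  have "((\<lambda>\<eta>. E (\<eta> - y') - E (\<eta> - y)) has_integral
      (1/2 - E_prim (m - y')) - (1/2 - E_prim (m - y))) {m..}"
    by (intro has_integral_diff E_has_integral_Ici)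
  then have "((\<lambda>\<eta>. E (\<eta> - y') - E (\<eta> - y)) has_integral 2 * E_prim ((y' - y) / 2)) {m..}"
    unfolding mid by (simp add: E_prim_minus)
  then have "((\<lambda>\<eta>. if \<eta> \<in> {m..} then B * (E (\<eta> - y') - E (\<eta> - y)) else 0) has_integral
      B * (2 * E_prim ((y' - y) / 2))) {0..}"
    using assms(3,4) by (subst has_integral_restrict) (auto intro: has_integral_mult_right simp: m_def)
  then have "E_conv \<phi> y' - E_conv \<phi> y \<le> B * (2 * E_prim ((y' - y) / 2))"
  proof (rule has_integral_le_except[OF has_integral_diff[OF E_conv_has_integral[OF \<phi>]
          E_conv_has_integral[OF \<phi>]] _ negligible_finite[of "{y, y'}"]])
    show "finite {y, y'}" by simp
    fix \<eta>
    assume \<eta>: "\<eta> \<in> {0..} - {y, y'}"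
    then have "m \<le> \<eta> \<Longrightarrow> E (y - \<eta>) \<le> E (y' - \<eta>)" "\<not> m \<le> \<eta> \<Longrightarrow> E (y' - \<eta>) \<le> E (y - \<eta>)"
      using assms(4) by (auto intro!: E_le_if_closer simp: m_def)
    then have "(E (y' - \<eta>) - E (y - \<eta>)) * \<phi> \<eta> \<le> (if m \<le> \<eta> then B * (E (y' - \<eta>) - E (y - \<eta>)) else 0)"
      using assms(2)[of \<eta>] \<eta> by (intro mult_le_sign_part) auto
    then show "E (y' - \<eta>) * \<phi> \<eta> - E (y - \<eta>) * \<phi> \<eta>
        \<le> (if \<eta> \<in> {m..} then B * (E (\<eta> - y') - E (\<eta> - y)) else 0)"
      by (auto simp: E_minus_commute[of \<eta>] left_diff_distrib split: if_splits)
  qed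
  then show ?thesis
    by simp
qed

lemma bound_by_sqrt:
  fixes d \<Delta> a b A :: real
  assumes "0 \<le> d" "\<Delta> \<le> a * d + b * sqrt d" "\<Delta> \<le> A" "0 \<le> a" "0 \<le> b" "0 \<le> A"
  shows "\<Delta> \<le> (a + b + A) * sqrt d"
proof (cases "d \<le> 1")
  case True
  have "d = sqrt d * sqrt d"
    using assms(1) by simp
  also have "\<dots> \<le> sqrt d"
    using True assms(1) by (intro mult_left_le) auto
  finally have "a * d \<le> a * sqrt d"
    using assms(4) by (rule mult_left_mono)
  moreover have "0 \<le> A * sqrt d"
    using assms(1,6) by simp
  ultimately show ?thesis
    using assms(2) by (simp add: algebra_simps)
next
  case False
  then have "A \<le> A * sqrt d"
    using assms(6) by (simp add: mult_le_cancel_left1)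
  moreover have "0 \<le> a * sqrt d" "0 \<le> b * sqrt d"
    using assms(1,4,5) by simp_all
  ultimately show ?thesis
    using assms(3) by (simp add: algebra_simps)
qed

lemma E_conv_holder:
  assumes "continuous_on {0..} \<phi>" "\<And>x. x \<ge> 0 \<Longrightarrow> 0 \<le> \<phi> x \<and> \<phi> x \<le> B"
    and "0 \<le> y" "0 \<le> y'"
  shows "\<bar>E_conv \<phi> y - E_conv \<phi> y'\<bar> \<le> 4 * B * sqrt \<bar>y - y'\<bar>"
proof -
  have B: "B \<ge> 0"
    using assms(2)[of 0] by auto
  have *: "\<bar>E_conv \<phi> a - E_conv \<phi> b\<bar> \<le> 4 * B * sqrt (b - a)" if "0 \<le> a" "a < b" for a b
  proof -
    have "\<bar>E_conv \<phi> a - E_conv \<phi> b\<bar> \<le> 2 * B * E_prim ((b - a) / 2)"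
      using E_conv_decrease_le[OF assms(1,2) that] E_conv_increase_le[OF assms(1,2) that] by linarith
    also have "\<dots> \<le> 2 * B * (((b - a) / 2 + 2 * sqrt ((b - a) / 2)) / 2)"
      using abs_E_prim_le_sqrt[of "(b - a) / 2"] that B by (intro mult_left_mono) auto
    also have "\<dots> = B * (b - a) / 2 + 2 * B * sqrt ((b - a) / 2)"
      by (simp add: algebra_simps)
    also have "\<dots> \<le> B * (b - a) + 2 * B * sqrt (b - a)"
      using that B by (intro add_mono mult_left_mono) auto
    finally have "\<bar>E_conv \<phi> a - E_conv \<phi> b\<bar> \<le> B * (b - a) + 2 * B * sqrt (b - a)" .
    moreover have "\<bar>E_conv \<phi> a - E_conv \<phi> b\<bar> \<le> B"
      using E_conv_bounds[OF assms(1,2), of a] E_conv_bounds[OF assms(1,2), of b] by linarith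
    ultimately have "\<bar>E_conv \<phi> a - E_conv \<phi> b\<bar> \<le> (B + 2 * B + B) * sqrt (b - a)"
      using that B by (intro bound_by_sqrt) auto
    then show ?thesis
      by simp
  qed
  show ?thesis
    using *[of y y'] *[of y' y] assms(3,4)
    by (cases y y' rule: linorder_cases) (auto simp: abs_minus_commute)
qed

lemma continuous_on_if_sqrt_holder:
  fixes f :: "real \<Rightarrow> real"
  assumes "\<And>x y. x \<in> S \<Longrightarrow> y \<in> S \<Longrightarrow> \<bar>f x - f y\<bar> \<le> L * sqrt \<bar>x - y\<bar>"
  shows "continuous_on S f"
  unfolding continuous_on_iff
proof (intro ballI allI impI)
  fix x e :: real
  assume x: "x \<in> S" and e: "0 < e"
  define L' where "L' = \<bar>L\<bar> + 1"
  have L': "0 < L'" "L \<le> L'"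
    by (auto simp: L'_def)
  show "\<exists>d>0. \<forall>x'\<in>S. dist x' x < d \<longrightarrow> dist (f x') (f x) < e"
  proof (intro exI[of _ "(e / L')\<^sup>2"] conjI ballI impI)
    show "0 < (e / L')\<^sup>2"
      using e L' by simp
    fix x'
    assume x': "x' \<in> S" "dist x' x < (e / L')\<^sup>2"
    have "\<bar>f x' - f x\<bar> \<le> L' * sqrt \<bar>x' - x\<bar>"
      using assms[OF x'(1) x] L' by (smt (verit) mult_right_mono real_sqrt_ge_zero)
    also have "\<dots> < L' * (e / L')"
      using x'(2) L' e by (intro mult_strict_left_mono) (auto simp: dist_real_def real_less_lsqrt)
    also have "\<dots> = e"
      using L' by simp
    finally show "dist (f x') (f x) < e"
      by (simp add: dist_real_def)
  qed
qed

lemma E_conv_continuous_on: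
  assumes "continuous_on {0..} \<phi>" "\<And>x. x \<ge> 0 \<Longrightarrow> 0 \<le> \<phi> x \<and> \<phi> x \<le> B"
  shows "continuous_on {0..} (E_conv \<phi>)"
  using E_conv_holder[OF assms] by (intro continuous_on_if_sqrt_holder) auto

definition exp_int :: "real \<Rightarrow> (real \<Rightarrow> real) \<Rightarrow> real \<Rightarrow> real" where
  "exp_int r h y = integral {0..y} (\<lambda>\<eta>. exp (- r * \<eta>) * h \<eta>)"

definition exp_int_inf :: "real \<Rightarrow> (real \<Rightarrow> real) \<Rightarrow> real" where
  "exp_int_inf r h = integral {0..} (\<lambda>\<eta>. exp (- r * \<eta>) * h \<eta>)"

lemma exp_int_has_integral:
  assumes "continuous_on {0..} h" "0 \<le> y"
  shows "((\<lambda>\<eta>. exp (- r * \<eta>) * h \<eta>) has_integral exp_int r h y) {0..y}"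
proof -
  have "continuous_on {0..y} h"
    using assms(1) by (rule continuous_on_subset) auto
  then show ?thesis
    unfolding exp_int_def by (intro integrable_integral integrable_continuous_interval continuous_intros)
qed

lemma exp_integrable_Ici:
  assumes "cont_bounded H h" "r > 0" "0 \<le> a"
  shows "(\<lambda>\<eta>. exp (- r * \<eta>) * h \<eta>) integrable_on {a..}"
proof (rule measurable_bounded_by_integrable_imp_integrable)
  have "continuous_on {a..} h"
    using cont_boundedD(1)[OF assms(1)] by (rule continuous_on_subset) (use assms(3) in auto)
  then show "(\<lambda>\<eta>. exp (- r * \<eta>) * h \<eta>) \<in> borel_measurable (lebesgue_on {a..})"
    by (intro continuous_imp_measurable_on_sets_lebesgue continuous_intros) auto
  show "(\<lambda>\<eta>. H * exp (- r * \<eta>)) integrable_on {a..}"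
    using has_integral_mult_right[OF has_integral_exp_minus_to_infinity[OF assms(2), of a], of H]
    by (auto simp: integrable_on_def)
  show "norm (exp (- r * \<eta>) * h \<eta>) \<le> H * exp (- r * \<eta>)" if "\<eta> \<in> {a..}" for \<eta>
    using cont_boundedD(2)[OF assms(1), of \<eta>] that assms(3) by (simp add: abs_mult mult.commute[of H])
qed auto

lemma exp_int_inf_has_integral:
  assumes "cont_bounded H h" "r > 0"
  shows "((\<lambda>\<eta>. exp (- r * \<eta>) * h \<eta>) has_integral exp_int_inf r h) {0..}"
  unfolding exp_int_inf_def using assms by (intro integrable_integral exp_integrable_Ici) auto

lemma exp_int_tail_has_integral:
  assumes "cont_bounded H h" "r > 0" "0 \<le> y"
  shows "((\<lambda>\<eta>. exp (- r * \<eta>) * h \<eta>) has_integral (exp_int_inf r h - exp_int r h y)) {y..}"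
proof -
  define tail where "tail = integral {y..} (\<lambda>\<eta>. exp (- r * \<eta>) * h \<eta>)"
  have tail: "((\<lambda>\<eta>. exp (- r * \<eta>) * h \<eta>) has_integral tail) {y..}"
    unfolding tail_def using assms by (intro integrable_integral exp_integrable_Ici) auto
  have "((\<lambda>\<eta>. exp (- r * \<eta>) * h \<eta>) has_integral (exp_int r h y + tail)) {0..}"
    using cont_boundedD(1)[OF assms(1)] assms(3)
    by (intro has_integral_Icc_Ici[OF assms(3) exp_int_has_integral tail])
  then have "exp_int_inf r h = exp_int r h y + tail"
    using exp_int_inf_has_integral[OF assms(1,2)] by (rule has_integral_unique[symmetric])
  then show ?thesis
    using tail by simp
qed

lemma exp_int_has_derivative:
  assumes "continuous_on {0..} h" "0 \<le> x"
  shows "(exp_int r h has_real_derivative h x / exp (r * x)) (at x within {0..})"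
proof -
  have "(exp_int r h has_real_derivative exp (- r * x) * h x) (at x within {0..x+1})"
    unfolding exp_int_def[abs_def] using assms
    by (intro integral_has_real_derivative continuous_intros continuous_on_subset[OF assms(1)]) auto
  moreover have "at x within {0..x+1} = at x within {0..}"
    by (rule at_within_nhd[of x "{..<x+1}"]) (use assms(2) in auto)
  moreover have "exp (- r * x) * h x = h x / exp (r * x)"
    by (simp add: exp_minus field_simps)
  ultimately show ?thesis
    by simp
qed

lemma has_integral_exp_Icc:
  fixes r y :: real
  assumes "r \<noteq> 0" "0 \<le> y"
  shows "((\<lambda>\<eta>. exp (- r * \<eta>)) has_integral (1 - exp (- r * y)) / r) {0..y}"
proof -
  have "((\<lambda>\<eta>. exp (- r * \<eta>)) has_integral (- exp (- r * y) / r) - (- exp (- r * 0) / r)) {0..y}"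
    using assms
    by (intro fundamental_theorem_of_calculus[where f = "\<lambda>\<eta>. - exp (- r * \<eta>) / r"])
       (auto intro!: derivative_eq_intros simp flip: has_real_derivative_iff_has_vector_derivative)
  then show ?thesis
    by (simp add: diff_divide_distrib)
qed

lemma abs_has_integral_le:
  fixes f g :: "real \<Rightarrow> real"
  assumes "(f has_integral i) S" "(g has_integral j) S" "\<And>x. x \<in> S \<Longrightarrow> \<bar>f x\<bar> \<le> g x"
  shows "\<bar>i\<bar> \<le> j"
proof -
  have "i \<le> j"
    by (rule has_integral_le[OF assms(1,2)]) (use assms(3) in force)
  moreover have "- i \<le> j"
    by (rule has_integral_le[OF has_integral_neg[OF assms(1)] assms(2)]) (use assms(3) in force)
  ultimately show ?thesis
    by simp
qed

lemma abs_exp_int_le: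
  assumes "cont_bounded H h" "r \<noteq> 0" "0 \<le> y"
  shows "\<bar>exp_int r h y\<bar> \<le> H * ((1 - exp (- r * y)) / r)"
  by (rule abs_has_integral_le[OF exp_int_has_integral[OF cont_boundedD(1)[OF assms(1)] assms(3)]
        has_integral_mult_right[OF has_integral_exp_Icc[OF assms(2,3)]]])
     (use cont_boundedD(2)[OF assms(1)] in \<open>auto simp: abs_mult mult.commute[of H] intro!: mult_left_mono\<close>)

lemma abs_exp_int_inf_le:
  assumes "cont_bounded H h" "r > 0"
  shows "\<bar>exp_int_inf r h\<bar> \<le> H / r"
  using abs_has_integral_le[OF exp_int_inf_has_integral[OF assms]
      has_integral_mult_right[OF has_integral_exp_minus_to_infinity[OF assms(2), of 0], of H]]
    cont_boundedD(2)[OF assms(1)]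
  by (auto simp: abs_mult mult.commute[of H] intro!: mult_left_mono)

lemma abs_exp_int_tail_le:
  assumes "cont_bounded H h" "r > 0" "0 \<le> y"
  shows "\<bar>exp_int_inf r h - exp_int r h y\<bar> \<le> H * (exp (- r * y) / r)"
  by (rule abs_has_integral_le[OF exp_int_tail_has_integral[OF assms]
        has_integral_mult_right[OF has_integral_exp_minus_to_infinity[OF assms(2)]]])
     (use cont_boundedD(2)[OF assms(1)] assms(3) in \<open>auto simp: abs_mult mult.commute[of H] intro!: mult_left_mono\<close>)

lemma exp_int_tendsto:
  assumes "\<And>k. cont_bounded H (hs k)" "\<And>x. x \<ge> 0 \<Longrightarrow> (\<lambda>k. hs k x) \<longlonglongrightarrow> h x" "0 \<le> y"
  shows "(\<lambda>k. exp_int r (hs k) y) \<longlonglongrightarrow> exp_int r h y"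
  unfolding exp_int_def
proof (rule dominated_convergence(2))
  show "(\<lambda>\<eta>. exp (- r * \<eta>) * hs k \<eta>) integrable_on {0..y}" for k
    using exp_int_has_integral[OF cont_boundedD(1)[OF assms(1)] assms(3)] by blast
  show "(\<lambda>\<eta>. H * exp (- r * \<eta>)) integrable_on {0..y}"
    by (intro integrable_continuous_interval continuous_intros)
  show "norm (exp (- r * \<eta>) * hs k \<eta>) \<le> H * exp (- r * \<eta>)" if "\<eta> \<in> {0..y}" for k \<eta>
    using cont_boundedD(2)[OF assms(1), of \<eta> k] that by (simp add: abs_mult mult.commute[of H])
  show "(\<lambda>k. exp (- r * \<eta>) * hs k \<eta>) \<longlonglongrightarrow> exp (- r * \<eta>) * h \<eta>" if "\<eta> \<in> {0..y}" for \<eta>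
    using assms(2)[of \<eta>] that by (auto intro!: tendsto_intros)
qed

lemma exp_int_inf_tendsto:
  assumes "\<And>k. cont_bounded H (hs k)" "\<And>x. x \<ge> 0 \<Longrightarrow> (\<lambda>k. hs k x) \<longlonglongrightarrow> h x" "r > 0"
  shows "(\<lambda>k. exp_int_inf r (hs k)) \<longlonglongrightarrow> exp_int_inf r h"
  unfolding exp_int_inf_def
proof (rule dominated_convergence(2))
  show "(\<lambda>\<eta>. exp (- r * \<eta>) * hs k \<eta>) integrable_on {0..}" for k
    using exp_integrable_Ici[OF assms(1) assms(3)] by simp
  show "(\<lambda>\<eta>. H * exp (- r * \<eta>)) integrable_on {0..}"
    using has_integral_mult_right[OF has_integral_exp_minus_to_infinity[OF assms(3), of 0], of H]
    by (auto simp: integrable_on_def)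
  show "norm (exp (- r * \<eta>) * hs k \<eta>) \<le> H * exp (- r * \<eta>)" if "\<eta> \<in> {0..}" for k \<eta>
    using cont_boundedD(2)[OF assms(1), of \<eta> k] that by (simp add: abs_mult mult.commute[of H])
  show "(\<lambda>k. exp (- r * \<eta>) * hs k \<eta>) \<longlonglongrightarrow> exp (- r * \<eta>) * h \<eta>" if "\<eta> \<in> {0..}" for \<eta>
    using assms(2)[of \<eta>] that by (auto intro!: tendsto_intros)
qed

lemma exp_mult_has_derivative: "((\<lambda>y. exp (r * y)) has_real_derivative exp (r * x) * r) (at x within S)"
  by (auto intro!: derivative_eq_intros)

lemma lipschitz_on_if_deriv_bound:
  fixes f :: "real \<Rightarrow> real"
  assumes "convex S" "\<And>x. x \<in> S \<Longrightarrow> (f has_real_derivative f' x) (at x within S)"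
    and "\<And>x. x \<in> S \<Longrightarrow> \<bar>f' x\<bar> \<le> B" "0 \<le> B"
  shows "B-lipschitz_on S f"
proof (rule lipschitz_onI)
  show "dist (f x) (f y) \<le> B * dist x y" if "x \<in> S" "y \<in> S" for x y
    using field_differentiable_bound[OF assms(1,2), of B y x] assms(3) that
    by (simp add: dist_real_def abs_minus_commute)
qed (rule assms(4))

locale linear_bvp =
  fixes c M T :: real
  assumes c_pos: "c > 0" and M_pos: "M > 0" and T_pos: "T > 0"
begin

definition "disc = sqrt (c\<^sup>2 + 4 * M)"
definition "r1 = (c + disc) / 2"
definition "r2 = (c - disc) / 2"

lemma disc_gt_c: "disc > c"
proof -
  have "sqrt (c\<^sup>2) < disc"
    unfolding disc_def using M_pos by (intro real_sqrt_less_mono) simp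
  then show ?thesis
    using c_pos by simp
qed

lemma disc_pos: "disc > 0"
  using disc_gt_c c_pos by simp

lemma r1_pos: "r1 > 0"
  using disc_pos c_pos by (simp add: r1_def)

lemma r2_neg: "r2 < 0"
  using disc_gt_c by (simp add: r2_def)

lemma r1_minus_r2: "r1 - r2 = disc"
  by (simp add: r1_def r2_def field_simps)

lemma disc_sq: "disc\<^sup>2 = c\<^sup>2 + 4 * M"
  unfolding disc_def using M_pos c_pos by simp

lemma r1_sq: "r1 * r1 = c * r1 + M"
  unfolding r1_def using disc_sq by (simp add: power2_eq_square field_simps)

lemma r2_sq: "r2 * r2 = c * r2 + M"
  unfolding r2_def using disc_sq by (simp add: power2_eq_square field_simps)

lemma r1_mult_r2: "r1 * r2 = - M"
  unfolding r1_def r2_def using disc_sq by (simp add: power2_eq_square field_simps)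

text \<open>Variation of constants with the characteristic roots \<open>r2 < 0 < r1\<close> of \<open>u'' - c u' - M u\<close>:
  \<open>lsol h\<close> is the bounded solution of \<open>u'' - c u' - M u = - h\<close>, \<open>u 0 = T\<close>.\<close>

definition "lsol_r2_part h y = exp (r2 * y) * (exp_int r2 h y - exp_int_inf r1 h)"
definition "lsol_r1_part h y = exp (r1 * y) * (exp_int_inf r1 h - exp_int r1 h y)"

definition "lsol h y = T * exp (r2 * y) + (lsol_r2_part h y + lsol_r1_part h y) / disc"
definition "lsol_deriv h y = r2 * T * exp (r2 * y) + (r2 * lsol_r2_part h y + r1 * lsol_r1_part h y) / disc"

lemma lsol_0: "lsol h 0 = T"
  by (simp add: lsol_def lsol_r2_part_def lsol_r1_part_def exp_int_def)

lemma lsol_r2_part_has_derivative: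
  assumes "continuous_on {0..} h" "0 \<le> x"
  shows "(lsol_r2_part h has_real_derivative r2 * lsol_r2_part h x + h x) (at x within {0..})"
  unfolding lsol_r2_part_def[abs_def]
  by (rule DERIV_cong[OF DERIV_mult'[OF exp_mult_has_derivative DERIV_diff[OF exp_int_has_derivative[OF assms] DERIV_const]]])
     (simp add: algebra_simps)

lemma lsol_r1_part_has_derivative:
  assumes "continuous_on {0..} h" "0 \<le> x"
  shows "(lsol_r1_part h has_real_derivative r1 * lsol_r1_part h x - h x) (at x within {0..})"
  unfolding lsol_r1_part_def[abs_def]
  by (rule DERIV_cong[OF DERIV_mult'[OF exp_mult_has_derivative DERIV_diff[OF DERIV_const exp_int_has_derivative[OF assms]]]])
     (simp add: algebra_simps)

lemma lsol_has_derivative: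
  assumes "continuous_on {0..} h" "0 \<le> x"
  shows "(lsol h has_real_derivative lsol_deriv h x) (at x within {0..})"
  unfolding lsol_def[abs_def]
  by (rule DERIV_cong[OF DERIV_add[OF DERIV_cmult[OF exp_mult_has_derivative] DERIV_cdivide[OF
        DERIV_add[OF lsol_r2_part_has_derivative[OF assms] lsol_r1_part_has_derivative[OF assms]]]]])
     (simp add: lsol_deriv_def algebra_simps)

lemma lsol_deriv_has_derivative:
  assumes "continuous_on {0..} h" "0 \<le> x"
  shows "(lsol_deriv h has_real_derivative c * lsol_deriv h x + M * lsol h x - h x) (at x within {0..})"
  unfolding lsol_deriv_def[abs_def]
proof (rule DERIV_cong[OF DERIV_add[OF DERIV_cmult[OF exp_mult_has_derivative] DERIV_cdivide[OF
        DERIV_add[OF DERIV_cmult[OF lsol_r2_part_has_derivative[OF assms]]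
          DERIV_cmult[OF lsol_r1_part_has_derivative[OF assms]]]]]])
  let ?U = "lsol_r2_part h x" and ?V = "lsol_r1_part h x"
  have "r2 * h x - r1 * h x = - (disc * h x)"
    using r1_minus_r2 by (simp add: algebra_simps)
  then have "(r2 * h x - r1 * h x) / disc = - h x"
    using disc_pos by simp
  then have "r2 * T * (exp (r2 * x) * r2) + (r2 * (r2 * ?U + h x) + r1 * (r1 * ?V - h x)) / disc
      = (r2 * r2) * T * exp (r2 * x) + ((r2 * r2) * ?U + (r1 * r1) * ?V) / disc - h x"
    by (simp add: algebra_simps add_divide_distrib diff_divide_distrib)
  also have "\<dots> = c * (r2 * T * exp (r2 * x) + (r2 * ?U + r1 * ?V) / disc) + M * lsol h x - h x"
    unfolding r1_sq r2_sq lsol_def by (simp add: algebra_simps add_divide_distrib)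
  finally show "r2 * T * (exp (r2 * x) * r2) + (r2 * (r2 * ?U + h x) + r1 * (r1 * ?V - h x)) / disc
      = c * (r2 * T * exp (r2 * x) + (r2 * ?U + r1 * ?V) / disc) + M * lsol h x - h x" .
qed

lemma abs_lsol_r2_part_le:
  assumes "cont_bounded H h" "0 \<le> y"
  shows "\<bar>lsol_r2_part h y\<bar> \<le> H / (- r2) + H / r1"
proof -
  have H: "0 \<le> H"
    by (rule cont_boundedD(3)[OF assms(1)])
  have e: "0 < exp (r2 * y)" "exp (r2 * y) \<le> 1"
    using r2_neg assms(2) by (auto simp: mult_nonpos_nonneg)
  have "exp (r2 * y) * \<bar>exp_int r2 h y\<bar> \<le> exp (r2 * y) * (H * ((1 - exp (- r2 * y)) / r2))"
    using abs_exp_int_le[OF assms(1) _ assms(2)] r2_neg e by (intro mult_left_mono) auto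
  also have "\<dots> = H * ((1 - exp (r2 * y)) / (- r2))"
    using r2_neg by (simp add: field_simps flip: exp_add)
  also have "\<dots> \<le> H * (1 / (- r2))"
    using e r2_neg H by (intro mult_left_mono divide_right_mono) auto
  finally have "exp (r2 * y) * \<bar>exp_int r2 h y\<bar> \<le> H / (- r2)"
    by simp
  moreover have "exp (r2 * y) * \<bar>exp_int_inf r1 h\<bar> \<le> 1 * (H / r1)"
    using abs_exp_int_inf_le[OF assms(1) r1_pos] e by (intro mult_mono) auto
  moreover have "\<bar>lsol_r2_part h y\<bar> \<le> exp (r2 * y) * \<bar>exp_int r2 h y\<bar> + exp (r2 * y) * \<bar>exp_int_inf r1 h\<bar>"
    unfolding lsol_r2_part_def abs_mult using e abs_triangle_ineq4
    by (simp flip: distrib_left add: mult_left_mono)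
  ultimately show ?thesis
    by linarith
qed

lemma abs_lsol_r1_part_le:
  assumes "cont_bounded H h" "0 \<le> y"
  shows "\<bar>lsol_r1_part h y\<bar> \<le> H / r1"
proof -
  have "\<bar>lsol_r1_part h y\<bar> = exp (r1 * y) * \<bar>exp_int_inf r1 h - exp_int r1 h y\<bar>"
    by (simp add: lsol_r1_part_def abs_mult)
  also have "\<dots> \<le> exp (r1 * y) * (H * (exp (- r1 * y) / r1))"
    by (intro mult_left_mono abs_exp_int_tail_le[OF assms(1) r1_pos assms(2)]) simp
  also have "\<dots> = H * (exp (r1 * y) * exp (- r1 * y)) / r1"
    by simp
  also have "\<dots> = H / r1"
    by (simp flip: exp_add)
  finally show ?thesis .
qed

definition "lsol_deriv_bound H = - r2 * T + (2 * H - r2 * H / r1) / disc"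

lemma abs_lsol_deriv_le:
  assumes "cont_bounded H h" "0 \<le> y"
  shows "\<bar>lsol_deriv h y\<bar> \<le> lsol_deriv_bound H"
proof -
  let ?X = "r2 * T * exp (r2 * y)" and ?Y = "r2 * lsol_r2_part h y + r1 * lsol_r1_part h y"
  have "\<bar>?X\<bar> \<le> - r2 * T"
    using r2_neg T_pos assms(2) by (simp add: abs_mult mult_nonpos_nonneg)
  have "\<bar>r2 * lsol_r2_part h y\<bar> \<le> - r2 * (H / (- r2) + H / r1)"
    unfolding abs_mult abs_of_neg[OF r2_neg]
    by (rule mult_left_mono[OF abs_lsol_r2_part_le[OF assms]]) (use r2_neg in simp)
  moreover have "\<bar>r1 * lsol_r1_part h y\<bar> \<le> r1 * (H / r1)"
    unfolding abs_mult abs_of_pos[OF r1_pos]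
    by (rule mult_left_mono[OF abs_lsol_r1_part_le[OF assms]]) (use r1_pos in simp)
  moreover have "- r2 * (H / (- r2) + H / r1) + r1 * (H / r1) = 2 * H - r2 * H / r1"
    using r2_neg r1_pos by (simp add: field_simps)
  ultimately have "\<bar>?Y\<bar> \<le> 2 * H - r2 * H / r1"
    using abs_triangle_ineq[of "r2 * lsol_r2_part h y" "r1 * lsol_r1_part h y"] by linarith
  have "\<bar>lsol_deriv h y\<bar> \<le> \<bar>?X\<bar> + \<bar>?Y\<bar> / disc"
    unfolding lsol_deriv_def using abs_triangle_ineq[of ?X "?Y / disc"] disc_pos by (simp add: abs_divide)
  also have "\<dots> \<le> lsol_deriv_bound H"
    unfolding lsol_deriv_bound_def using \<open>\<bar>?X\<bar> \<le> - r2 * T\<close> \<open>\<bar>?Y\<bar> \<le> 2 * H - r2 * H / r1\<close> disc_pos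
    by (intro add_mono divide_right_mono) auto
  finally show ?thesis .
qed

lemma lsol_deriv_bound_nonneg:
  assumes "0 \<le> H"
  shows "0 \<le> lsol_deriv_bound H"
proof -
  have "0 \<le> - r2 * T" "0 \<le> - r2 * H / r1"
    using r2_neg r1_pos T_pos assms by (simp_all add: mult_nonpos_nonneg divide_nonpos_pos)
  moreover have "0 \<le> (2 * H - r2 * H / r1) / disc"
    using calculation(2) assms disc_pos by simp
  ultimately show ?thesis
    unfolding lsol_deriv_bound_def by linarith
qed

lemma lsol_lipschitz:
  assumes "cont_bounded H h"
  shows "(lsol_deriv_bound H)-lipschitz_on {0..} (lsol h)"
  using lsol_has_derivative[OF cont_boundedD(1)[OF assms]] abs_lsol_deriv_le[OF assms]
    lsol_deriv_bound_nonneg[OF cont_boundedD(3)[OF assms]]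
  by (intro lipschitz_on_if_deriv_bound) auto

lemma lsol_alt:
  "lsol h y = T * exp (r2 * y) + (exp (r2 * y) * (exp_int r2 h y - exp_int r1 h y)
     + (exp (r1 * y) - exp (r2 * y)) * (exp_int_inf r1 h - exp_int r1 h y)) / disc"
  unfolding lsol_def lsol_r2_part_def lsol_r1_part_def by (simp add: algebra_simps)

text \<open>Comparison principle, read off from \<open>lsol_alt\<close>: both integrals there have nonnegative weights.\<close>

lemma lsol_mono:
  assumes h: "cont_bounded H h" and g: "cont_bounded H' g"
    and le: "\<And>x. x \<ge> 0 \<Longrightarrow> h x \<le> g x" and y: "0 \<le> y"
  shows "lsol h y \<le> lsol g y"
proof -
  note hc = cont_boundedD(1)[OF h] and gc = cont_boundedD(1)[OF g]
  have "((\<lambda>\<eta>. (exp (- r2 * \<eta>) * g \<eta> - exp (- r2 * \<eta>) * h \<eta>)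
       - (exp (- r1 * \<eta>) * g \<eta> - exp (- r1 * \<eta>) * h \<eta>)) has_integral
      (exp_int r2 g y - exp_int r2 h y) - (exp_int r1 g y - exp_int r1 h y)) {0..y}"
    using y by (intro has_integral_diff exp_int_has_integral hc gc)
  then have A: "0 \<le> (exp_int r2 g y - exp_int r2 h y) - (exp_int r1 g y - exp_int r1 h y)"
  proof (rule has_integral_nonneg)
    fix \<eta>
    assume "\<eta> \<in> {0..y}"
    then have "exp (- r1 * \<eta>) * (g \<eta> - h \<eta>) \<le> exp (- r2 * \<eta>) * (g \<eta> - h \<eta>)"
      using le r1_pos r2_neg by (intro mult_right_mono) (auto simp: mult_right_mono)
    then show "0 \<le> (exp (- r2 * \<eta>) * g \<eta> - exp (- r2 * \<eta>) * h \<eta>)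
       - (exp (- r1 * \<eta>) * g \<eta> - exp (- r1 * \<eta>) * h \<eta>)"
      by (simp add: algebra_simps)
  qed
  have "((\<lambda>\<eta>. exp (- r1 * \<eta>) * g \<eta> - exp (- r1 * \<eta>) * h \<eta>) has_integral
      (exp_int_inf r1 g - exp_int r1 g y) - (exp_int_inf r1 h - exp_int r1 h y)) {y..}"
    by (intro has_integral_diff exp_int_tail_has_integral[OF g r1_pos y] exp_int_tail_has_integral[OF h r1_pos y])
  then have B: "0 \<le> (exp_int_inf r1 g - exp_int r1 g y) - (exp_int_inf r1 h - exp_int r1 h y)"
    by (rule has_integral_nonneg) (use le y in \<open>auto simp flip: right_diff_distrib\<close>)
  have "exp (r2 * y) \<le> exp (r1 * y)"
    using r1_pos r2_neg y by (simp add: mult_right_mono)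
  then have "0 \<le> (exp (r2 * y) * ((exp_int r2 g y - exp_int r2 h y) - (exp_int r1 g y - exp_int r1 h y))
      + (exp (r1 * y) - exp (r2 * y)) * ((exp_int_inf r1 g - exp_int r1 g y) - (exp_int_inf r1 h - exp_int r1 h y))) / disc"
    using A B disc_pos by (intro divide_nonneg_pos add_nonneg_nonneg mult_nonneg_nonneg) auto
  also have "\<dots> = lsol g y - lsol h y"
    unfolding lsol_alt by (simp add: algebra_simps diff_divide_distrib add_divide_distrib)
  finally show ?thesis
    by simp
qed

lemma lsol_const:
  assumes "0 \<le> y"
  shows "lsol (\<lambda>_. K) y = T * exp (r2 * y) + K * (1 - exp (r2 * y)) / M"
proof -
  have A: "exp_int r2 (\<lambda>_. K) y = K * ((1 - exp (- r2 * y)) / r2)"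
    unfolding exp_int_def using has_integral_exp_Icc[OF _ assms, of r2] r2_neg
    by (intro integral_unique) (auto dest: has_integral_mult_right[of _ _ _ K] simp: mult.commute)
  have B: "exp_int r1 (\<lambda>_. K) y = K * ((1 - exp (- r1 * y)) / r1)"
    unfolding exp_int_def using has_integral_exp_Icc[OF _ assms, of r1] r1_pos
    by (intro integral_unique) (auto dest: has_integral_mult_right[of _ _ _ K] simp: mult.commute)
  have C: "exp_int_inf r1 (\<lambda>_. K) = K * (1 / r1)"
    unfolding exp_int_inf_def using has_integral_exp_minus_to_infinity[OF r1_pos, of 0]
    by (intro integral_unique) (auto dest: has_integral_mult_right[of _ _ _ K] simp: mult.commute)
  have e: "exp (r1 * y) * exp (- r1 * y) = 1" "exp (r2 * y) * exp (- r2 * y) = 1"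
    by (simp_all flip: exp_add)
  have "lsol (\<lambda>_. K) y = T * exp (r2 * y) + K * ((exp (r2 * y) - exp (r2 * y) * exp (- r2 * y)) / r2
       - exp (r2 * y) / r1 + exp (r1 * y) * exp (- r1 * y) / r1) / disc"
    unfolding lsol_def lsol_r2_part_def lsol_r1_part_def A B C
    by (simp add: algebra_simps diff_divide_distrib add_divide_distrib)
  also have "\<dots> = T * exp (r2 * y) + K * ((exp (r2 * y) - 1) * (r1 - r2) / (r1 * r2)) / disc"
    unfolding e using r1_pos r2_neg by (simp add: field_simps)
  also have "\<dots> = T * exp (r2 * y) + K * (1 - exp (r2 * y)) / M"
    unfolding r1_mult_r2 r1_minus_r2 using disc_pos M_pos by (simp add: field_simps)
  finally show ?thesis .
qed

lemma cont_bounded_const: "0 \<le> K \<Longrightarrow> cont_bounded K (\<lambda>_. K)"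
  by (simp add: cont_bounded_def)

lemma lsol_lower:
  assumes "cont_bounded H h" "\<And>x. x \<ge> 0 \<Longrightarrow> 0 \<le> h x" "0 \<le> y"
  shows "T * exp (r2 * y) \<le> lsol h y"
  using lsol_mono[OF cont_bounded_const[of 0] assms] lsol_const[OF assms(3), of 0] by simp

lemma lsol_upper:
  assumes "cont_bounded H h" "\<And>x. x \<ge> 0 \<Longrightarrow> h x \<le> M * T" "0 \<le> y"
  shows "lsol h y \<le> T"
proof -
  have "lsol h y \<le> lsol (\<lambda>_. M * T) y"
    using M_pos T_pos by (intro lsol_mono[OF assms(1) cont_bounded_const assms(2,3)]) auto
  also have "\<dots> = T"
    unfolding lsol_const[OF assms(3)] using M_pos by (simp add: field_simps)
  finally show ?thesis .
qed

lemma lsol_tendsto: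
  assumes "\<And>k. cont_bounded H (hs k)" "\<And>x. x \<ge> 0 \<Longrightarrow> (\<lambda>k. hs k x) \<longlonglongrightarrow> h x" "0 \<le> y"
  shows "(\<lambda>k. lsol (hs k) y) \<longlonglongrightarrow> lsol h y"
  unfolding lsol_def lsol_r2_part_def lsol_r1_part_def
  using exp_int_tendsto[OF assms] exp_int_inf_tendsto[OF assms(1,2) r1_pos] disc_pos
  by (intro tendsto_intros) auto

end

lemma abs_pow4_diff_le:
  fixes a b T :: real
  assumes "0 \<le> a" "a \<le> T" "0 \<le> b" "b \<le> T"
  shows "\<bar>a ^ 4 - b ^ 4\<bar> \<le> 4 * T ^ 3 * \<bar>a - b\<bar>"
proof -
  have "a ^ 4 - b ^ 4 = (a - b) * (a ^ 3 + a\<^sup>2 * b + a * b\<^sup>2 + b ^ 3)"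
    by (simp add: algebra_simps power2_eq_square power3_eq_cube power4_eq_xxxx)
  moreover have "a ^ 3 + a\<^sup>2 * b + a * b\<^sup>2 + b ^ 3 \<le> 4 * T ^ 3"
  proof -
    have "a ^ 3 \<le> T ^ 3" "b ^ 3 \<le> T ^ 3" "a\<^sup>2 * b \<le> T\<^sup>2 * T" "a * b\<^sup>2 \<le> T * T\<^sup>2"
      using assms by (auto intro: power_mono mult_mono)
    then show ?thesis
      by (simp add: power2_eq_square power3_eq_cube)
  qed
  moreover have "0 \<le> a ^ 3 + a\<^sup>2 * b + a * b\<^sup>2 + b ^ 3"
    using assms by simp
  ultimately show ?thesis
    by (simp add: abs_mult mult.commute mult_left_mono)
qed

abbreviation E_conv_pow4 :: "(real \<Rightarrow> real) \<Rightarrow> real \<Rightarrow> real" where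
  "E_conv_pow4 \<phi> \<equiv> E_conv (\<lambda>\<eta>. \<phi> \<eta> ^ 4)"

locale quartic_bvp = linear_bvp +
  assumes M_ge: "4 * T ^ 3 \<le> M"
begin

text \<open>The quartic equation \<open>u'' - c u' - u\<^sup>4 = - g\<close> is rewritten as \<open>u'' - c u' - M u = - (g + nonlin u)\<close>;
  the choice \<open>M \<ge> 4 T\<^sup>3\<close> makes \<open>nonlin\<close> increasing on \<open>[0, T]\<close>, so that the comparison principle
  \<open>lsol_mono\<close> drives monotone iterations.\<close>

definition nonlin :: "real \<Rightarrow> real" where
  "nonlin v = M * v - v ^ 4"

lemma nonlin_mono:
  assumes "0 \<le> v" "v \<le> w" "w \<le> T"
  shows "nonlin v \<le> nonlin w"
proof -
  have "\<bar>w ^ 4 - v ^ 4\<bar> \<le> 4 * T ^ 3 * \<bar>w - v\<bar>"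
    using assms by (intro abs_pow4_diff_le) auto
  also have "\<dots> \<le> M * (w - v)"
    using assms M_ge by (simp add: mult_right_mono)
  finally show ?thesis
    unfolding nonlin_def by (simp add: algebra_simps)
qed

lemma nonlin_bounds:
  assumes "0 \<le> v" "v \<le> T"
  shows "0 \<le> nonlin v" "nonlin v \<le> M * T - T ^ 4"
  using nonlin_mono[of 0 v] nonlin_mono[of v T] assms by (simp_all add: nonlin_def)

definition source :: "(real \<Rightarrow> real) \<Rightarrow> (real \<Rightarrow> real) \<Rightarrow> real \<Rightarrow> real" where
  "source g u x = g x + nonlin (u x)"

definition is_source :: "(real \<Rightarrow> real) \<Rightarrow> bool" where
  "is_source g \<longleftrightarrow> continuous_on {0..} g \<and> (\<forall>x\<ge>0. 0 \<le> g x \<and> g x \<le> T ^ 4)"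

definition "profile_lip = lsol_deriv_bound (M * T)"

definition is_profile :: "(real \<Rightarrow> real) \<Rightarrow> bool" where
  "is_profile u \<longleftrightarrow> (\<forall>x\<ge>0. 0 \<le> u x \<and> u x \<le> T) \<and> profile_lip-lipschitz_on {0..} u"

lemma is_profileD:
  assumes "is_profile u"
  shows "x \<ge> 0 \<Longrightarrow> 0 \<le> u x" "x \<ge> 0 \<Longrightarrow> u x \<le> T"
    and "profile_lip-lipschitz_on {0..} u" "continuous_on {0..} u"
  using assms lipschitz_on_continuous_on[of profile_lip "{0..}" u] by (simp_all add: is_profile_def)

lemma profile_lip_nonneg: "0 \<le> profile_lip"
  unfolding profile_lip_def using M_pos T_pos by (intro lsol_deriv_bound_nonneg) simp

lemma is_profile_zero: "is_profile (\<lambda>_. 0)"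
  using T_pos profile_lip_nonneg by (simp add: is_profile_def lipschitz_on_def)

lemma source_bounds:
  assumes "is_source g" "is_profile u" "x \<ge> 0"
  shows "0 \<le> source g u x" "source g u x \<le> M * T"
proof -
  have "0 \<le> g x" "g x \<le> T ^ 4"
    using assms(1,3) by (simp_all add: is_source_def)
  moreover have "0 \<le> nonlin (u x)" "nonlin (u x) \<le> M * T - T ^ 4"
    using nonlin_bounds is_profileD(1,2)[OF assms(2,3)] by simp_all
  ultimately show "0 \<le> source g u x" "source g u x \<le> M * T"
    by (simp_all add: source_def)
qed

lemma source_cont_bounded:
  assumes "is_source g" "is_profile u"
  shows "cont_bounded (M * T) (source g u)"
proof -
  have "continuous_on {0..} (source g u)"
    using assms is_profileD(4)[OF assms(2)]
    unfolding source_def nonlin_def is_source_def by (auto intro!: continuous_intros)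
  then show ?thesis
    using source_bounds[OF assms] by (auto simp: cont_bounded_def)
qed

lemma lsol_source_lower:
  assumes "is_source g" "is_profile u" "0 \<le> y"
  shows "T * exp (r2 * y) \<le> lsol (source g u) y"
  using lsol_lower[OF source_cont_bounded[OF assms(1,2)] source_bounds(1)[OF assms(1,2)] assms(3)] .

lemma is_profile_lsol_source:
  assumes "is_source g" "is_profile u"
  shows "is_profile (lsol (source g u))"
proof -
  have "0 \<le> T * exp (r2 * y)" for y
    using T_pos by simp
  then show ?thesis
    unfolding is_profile_def profile_lip_def
    using lsol_source_lower[OF assms] lsol_upper[OF source_cont_bounded[OF assms] source_bounds(2)[OF assms]]
      lsol_lipschitz[OF source_cont_bounded[OF assms]]
    by (meson order_trans)
qed

lemma lsol_source_mono:
  assumes "is_source g" "is_source g'" "is_profile u" "is_profile u'"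
    and "\<And>x. x \<ge> 0 \<Longrightarrow> g x \<le> g' x" "\<And>x. x \<ge> 0 \<Longrightarrow> u x \<le> u' x" "0 \<le> y"
  shows "lsol (source g u) y \<le> lsol (source g' u') y"
proof (rule lsol_mono[OF source_cont_bounded[OF assms(1,3)] source_cont_bounded[OF assms(2,4)] _ assms(7)])
  fix x :: real
  assume "0 \<le> x"
  then have "nonlin (u x) \<le> nonlin (u' x)"
    using assms(6) is_profileD(1,2)[OF assms(3)] is_profileD(2)[OF assms(4)] by (intro nonlin_mono) auto
  then show "source g u x \<le> source g' u' x"
    using assms(5)[OF \<open>0 \<le> x\<close>] by (simp add: source_def)
qed

primrec picard :: "(real \<Rightarrow> real) \<Rightarrow> nat \<Rightarrow> real \<Rightarrow> real" where
  "picard g 0 = (\<lambda>_. 0)"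
| "picard g (Suc k) = lsol (source g (picard g k))"

lemma is_profile_picard:
  assumes "is_source g"
  shows "is_profile (picard g k)"
  by (induction k) (simp_all add: is_profile_zero is_profile_lsol_source[OF assms])

lemma picard_mono:
  assumes "is_source g" "0 \<le> x"
  shows "picard g k x \<le> picard g (Suc k) x"
  using assms(2)
proof (induction k arbitrary: x)
  case 0
  then show ?case
    using is_profileD(1)[OF is_profile_picard[OF assms(1), of 1]] by simp
next
  case (Suc k)
  have "lsol (source g (picard g k)) x \<le> lsol (source g (picard g (Suc k))) x"
    using Suc by (intro lsol_source_mono[OF assms(1,1) is_profile_picard[OF assms(1)] is_profile_picard[OF assms(1)]]) auto
  then show ?case
    by simp
qed

lemma picard_mono_source:
  assumes "is_source g" "is_source g'" "\<And>x. x \<ge> 0 \<Longrightarrow> g x \<le> g' x" "0 \<le> x"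
  shows "picard g k x \<le> picard g' k x"
  using assms(4)
proof (induction k arbitrary: x)
  case (Suc k)
  then show ?case
    using lsol_source_mono[OF assms(1,2) is_profile_picard[OF assms(1)] is_profile_picard[OF assms(2)] assms(3)]
    by simp
qed simp

lemma is_profile_limit:
  assumes "\<And>k. is_profile (us k)" "\<And>x. x \<ge> 0 \<Longrightarrow> (\<lambda>k. us k x) \<longlonglongrightarrow> u x"
  shows "is_profile u"
  unfolding is_profile_def
proof (intro conjI allI impI lipschitz_onI)
  fix x :: real
  assume "0 \<le> x"
  show "0 \<le> u x"
    using is_profileD(1)[OF assms(1) \<open>0 \<le> x\<close>] by (intro LIMSEQ_le_const[OF assms(2)[OF \<open>0 \<le> x\<close>]]) auto
  show "u x \<le> T"
    using is_profileD(2)[OF assms(1) \<open>0 \<le> x\<close>] by (intro LIMSEQ_le_const2[OF assms(2)[OF \<open>0 \<le> x\<close>]]) auto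
next
  fix x y :: real
  assume "x \<in> {0..}" "y \<in> {0..}"
  then have "(\<lambda>k. dist (us k x) (us k y)) \<longlonglongrightarrow> dist (u x) (u y)"
    using assms(2) by (intro tendsto_intros) auto
  then show "dist (u x) (u y) \<le> profile_lip * dist x y"
    using lipschitz_onD[OF is_profileD(3)[OF assms(1)] \<open>x \<in> {0..}\<close> \<open>y \<in> {0..}\<close>]
    by (intro LIMSEQ_le_const2) auto
qed (rule profile_lip_nonneg)

definition sol :: "(real \<Rightarrow> real) \<Rightarrow> real \<Rightarrow> real" where
  "sol g x = (SUP k. picard g k x)"

lemma picard_tendsto_sol:
  assumes "is_source g" "0 \<le> x"
  shows "(\<lambda>k. picard g k x) \<longlonglongrightarrow> sol g x"
  unfolding sol_def
proof (rule LIMSEQ_incseq_SUP)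
  show "bdd_above (range (\<lambda>k. picard g k x))"
    using is_profileD(2)[OF is_profile_picard[OF assms(1)] assms(2)] by (auto intro!: bdd_aboveI[of _ T])
  show "incseq (\<lambda>k. picard g k x)"
    using picard_mono[OF assms] by (simp add: incseq_SucI)
qed

lemma is_profile_sol:
  assumes "is_source g"
  shows "is_profile (sol g)"
  using is_profile_limit[OF is_profile_picard[OF assms] picard_tendsto_sol[OF assms]] .

lemma source_tendsto:
  assumes "\<And>x. x \<ge> 0 \<Longrightarrow> (\<lambda>k. gs k x) \<longlonglongrightarrow> g x" "\<And>x. x \<ge> 0 \<Longrightarrow> (\<lambda>k. us k x) \<longlonglongrightarrow> u x" "0 \<le> x"
  shows "(\<lambda>k. source (gs k) (us k) x) \<longlonglongrightarrow> source g u x"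
  unfolding source_def nonlin_def using assms by (intro tendsto_intros) auto

lemma lsol_source_tendsto:
  assumes "\<And>k. is_source (gs k)" "\<And>k. is_profile (us k)"
    and "\<And>x. x \<ge> 0 \<Longrightarrow> (\<lambda>k. gs k x) \<longlonglongrightarrow> g x" "\<And>x. x \<ge> 0 \<Longrightarrow> (\<lambda>k. us k x) \<longlonglongrightarrow> u x" "0 \<le> y"
  shows "(\<lambda>k. lsol (source (gs k) (us k)) y) \<longlonglongrightarrow> lsol (source g u) y"
  using source_cont_bounded[OF assms(1,2)] source_tendsto[OF assms(3,4)] assms(5)
  by (rule lsol_tendsto)

definition mild_solution :: "(real \<Rightarrow> real) \<Rightarrow> (real \<Rightarrow> real) \<Rightarrow> bool" where
  "mild_solution g u \<longleftrightarrow> is_profile u \<and> (\<forall>x\<ge>0. u x = lsol (source g u) x)"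

lemma mild_solution_sol:
  assumes "is_source g"
  shows "mild_solution g (sol g)"
  unfolding mild_solution_def
proof (intro conjI allI impI is_profile_sol[OF assms])
  fix x :: real
  assume "0 \<le> x"
  have "(\<lambda>k. picard g (Suc k) x) \<longlonglongrightarrow> lsol (source g (sol g)) x"
    using lsol_source_tendsto[OF assms is_profile_picard[OF assms] _ picard_tendsto_sol[OF assms] \<open>0 \<le> x\<close>]
    by simp
  moreover have "(\<lambda>k. picard g (Suc k) x) \<longlonglongrightarrow> sol g x"
    using picard_tendsto_sol[OF assms \<open>0 \<le> x\<close>] by (rule LIMSEQ_Suc)
  ultimately show "sol g x = lsol (source g (sol g)) x"
    using LIMSEQ_unique by blast
qed

lemma sol_mono:
  assumes "is_source g" "is_source g'" "\<And>x. x \<ge> 0 \<Longrightarrow> g x \<le> g' x" "0 \<le> x"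
  shows "sol g x \<le> sol g' x"
  using picard_mono_source[OF assms]
  by (intro LIMSEQ_le[OF picard_tendsto_sol[OF assms(1,4)] picard_tendsto_sol[OF assms(2,4)]]) auto

definition "deriv1 g u = lsol_deriv (source g u)"

definition "deriv2 g u x = c * deriv1 g u x + u x ^ 4 - g x"

definition "deriv2_bound = c * profile_lip + T ^ 4"

definition "deriv2_holder_const = c * (deriv2_bound + 2 * profile_lip) + 4 * T ^ 3 * profile_lip + 5 * T ^ 4"

definition "norm_bound = T + profile_lip + deriv2_bound + deriv2_holder_const"

lemma deriv2_bound_nonneg: "0 \<le> deriv2_bound"
  unfolding deriv2_bound_def using c_pos profile_lip_nonneg by simp

lemma norm_bound_nonneg: "0 \<le> norm_bound"
  unfolding norm_bound_def deriv2_holder_const_def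
  using T_pos c_pos profile_lip_nonneg deriv2_bound_nonneg by simp

lemma mild_solution_has_derivative:
  assumes "is_source g" "mild_solution g u" "0 \<le> x"
  shows "(u has_real_derivative deriv1 g u x) (at x within {0..})"
proof -
  have u: "is_profile u" "\<And>x. x \<ge> 0 \<Longrightarrow> u x = lsol (source g u) x"
    using assms(2) by (auto simp: mild_solution_def)
  have "(lsol (source g u) has_real_derivative deriv1 g u x) (at x within {0..})"
    unfolding deriv1_def using cont_boundedD(1)[OF source_cont_bounded[OF assms(1) u(1)]] assms(3)
    by (rule lsol_has_derivative)
  then show ?thesis
    by (rule has_field_derivative_transform_within[of _ _ _ _ 1]) (use assms(3) u(2) in auto)
qed

lemma deriv1_has_derivative:
  assumes "is_source g" "mild_solution g u" "0 \<le> x"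
  shows "(deriv1 g u has_real_derivative deriv2 g u x) (at x within {0..})"
proof -
  have u: "is_profile u" "u x = lsol (source g u) x"
    using assms(2,3) by (auto simp: mild_solution_def)
  have "(deriv1 g u has_real_derivative c * deriv1 g u x + M * lsol (source g u) x - source g u x)
      (at x within {0..})"
    unfolding deriv1_def using cont_boundedD(1)[OF source_cont_bounded[OF assms(1) u(1)]] assms(3)
    by (rule lsol_deriv_has_derivative)
  moreover have "c * deriv1 g u x + M * lsol (source g u) x - source g u x = deriv2 g u x"
    by (simp add: deriv2_def source_def nonlin_def flip: u(2))
  ultimately show ?thesis
    by simp
qed

lemma abs_deriv1_le:
  assumes "is_source g" "is_profile u" "0 \<le> x"
  shows "\<bar>deriv1 g u x\<bar> \<le> profile_lip"
  unfolding deriv1_def profile_lip_def using source_cont_bounded[OF assms(1,2)] assms(3)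
  by (rule abs_lsol_deriv_le)

lemma abs_deriv2_le:
  assumes "is_source g" "is_profile u" "0 \<le> x"
  shows "\<bar>deriv2 g u x\<bar> \<le> deriv2_bound"
proof -
  have "\<bar>c * deriv1 g u x\<bar> \<le> c * profile_lip"
    using abs_deriv1_le[OF assms] c_pos by (simp add: abs_mult)
  moreover have "0 \<le> u x ^ 4" "u x ^ 4 \<le> T ^ 4" "0 \<le> g x" "g x \<le> T ^ 4"
    using is_profileD(1,2)[OF assms(2,3)] assms(1,3) by (auto simp: is_source_def intro: power_mono)
  ultimately show ?thesis
    unfolding deriv2_def deriv2_bound_def by linarith
qed

lemma deriv1_holder:
  assumes "is_source g" "mild_solution g u" "0 \<le> x" "0 \<le> y"
  shows "\<bar>deriv1 g u x - deriv1 g u y\<bar> \<le> (deriv2_bound + 0 + 2 * profile_lip) * sqrt \<bar>x - y\<bar>"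
proof (rule bound_by_sqrt)
  have u: "is_profile u"
    using assms(2) by (simp add: mild_solution_def)
  have "deriv2_bound-lipschitz_on {0..} (deriv1 g u)"
    using deriv1_has_derivative[OF assms(1,2)] abs_deriv2_le[OF assms(1) u] deriv2_bound_nonneg
    by (intro lipschitz_on_if_deriv_bound) auto
  then show "\<bar>deriv1 g u x - deriv1 g u y\<bar> \<le> deriv2_bound * \<bar>x - y\<bar> + 0 * sqrt \<bar>x - y\<bar>"
    using lipschitz_onD[of deriv2_bound "{0..}" "deriv1 g u" x y] assms(3,4) by (simp add: dist_real_def)
  show "\<bar>deriv1 g u x - deriv1 g u y\<bar> \<le> 2 * profile_lip"
    using abs_deriv1_le[OF assms(1) u assms(3)] abs_deriv1_le[OF assms(1) u assms(4)] by linarith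
qed (use deriv2_bound_nonneg profile_lip_nonneg in auto)

lemma pow4_holder:
  assumes "is_profile u" "0 \<le> x" "0 \<le> y"
  shows "\<bar>u x ^ 4 - u y ^ 4\<bar> \<le> (4 * T ^ 3 * profile_lip + 0 + T ^ 4) * sqrt \<bar>x - y\<bar>"
proof (rule bound_by_sqrt)
  note bounds = is_profileD(1,2)[OF assms(1)]
  have "\<bar>u x ^ 4 - u y ^ 4\<bar> \<le> 4 * T ^ 3 * \<bar>u x - u y\<bar>"
    using bounds assms(2,3) by (intro abs_pow4_diff_le) auto
  also have "\<dots> \<le> 4 * T ^ 3 * (profile_lip * \<bar>x - y\<bar>)"
    using lipschitz_onD[OF is_profileD(3)[OF assms(1)], of x y] assms(2,3) T_pos
    by (intro mult_left_mono) (auto simp: dist_real_def)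
  finally show "\<bar>u x ^ 4 - u y ^ 4\<bar> \<le> 4 * T ^ 3 * profile_lip * \<bar>x - y\<bar> + 0 * sqrt \<bar>x - y\<bar>"
    by (simp add: mult.assoc)
  have "0 \<le> u x ^ 4" "u x ^ 4 \<le> T ^ 4" "0 \<le> u y ^ 4" "u y ^ 4 \<le> T ^ 4"
    using bounds assms(2,3) by (auto intro: power_mono)
  then show "\<bar>u x ^ 4 - u y ^ 4\<bar> \<le> T ^ 4"
    by linarith
qed (use profile_lip_nonneg T_pos in auto)

lemma deriv2_holder:
  assumes "is_source g" "mild_solution g u"
    and g_holder: "\<And>x y. x \<ge> 0 \<Longrightarrow> y \<ge> 0 \<Longrightarrow> \<bar>g x - g y\<bar> \<le> 4 * T ^ 4 * sqrt \<bar>x - y\<bar>"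
    and "0 \<le> x" "0 \<le> y"
  shows "\<bar>deriv2 g u x - deriv2 g u y\<bar> \<le> deriv2_holder_const * sqrt \<bar>x - y\<bar>"
proof -
  have u: "is_profile u"
    using assms(2) by (simp add: mild_solution_def)
  have "\<bar>deriv2 g u x - deriv2 g u y\<bar>
      \<le> c * \<bar>deriv1 g u x - deriv1 g u y\<bar> + \<bar>u x ^ 4 - u y ^ 4\<bar> + \<bar>g x - g y\<bar>"
  proof -
    have "deriv2 g u x - deriv2 g u y = c * (deriv1 g u x - deriv1 g u y) + (u x ^ 4 - u y ^ 4) - (g x - g y)"
      by (simp add: deriv2_def algebra_simps)
    moreover have "\<bar>c * (deriv1 g u x - deriv1 g u y)\<bar> = c * \<bar>deriv1 g u x - deriv1 g u y\<bar>"
      using c_pos by (simp add: abs_mult)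
    ultimately show ?thesis
      by linarith
  qed
  also have "\<dots> \<le> c * ((deriv2_bound + 0 + 2 * profile_lip) * sqrt \<bar>x - y\<bar>)
      + (4 * T ^ 3 * profile_lip + 0 + T ^ 4) * sqrt \<bar>x - y\<bar> + 4 * T ^ 4 * sqrt \<bar>x - y\<bar>"
    using deriv1_holder[OF assms(1,2,4,5)] pow4_holder[OF u assms(4,5)] g_holder[OF assms(4,5)] c_pos
    by (intro add_mono mult_left_mono) auto
  also have "\<dots> = deriv2_holder_const * sqrt \<bar>x - y\<bar>"
    unfolding deriv2_holder_const_def by (simp add: algebra_simps)
  finally show ?thesis .
qed

lemma mild_solution_C2h:
  assumes "is_source g" "mild_solution g u"
    and "\<And>x y. x \<ge> 0 \<Longrightarrow> y \<ge> 0 \<Longrightarrow> \<bar>g x - g y\<bar> \<le> 4 * T ^ 4 * sqrt \<bar>x - y\<bar>"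
  shows "C2h u (deriv1 g u) (deriv2 g u) norm_bound"
proof -
  have u: "is_profile u"
    using assms(2) by (simp add: mild_solution_def)
  have nonneg: "0 \<le> profile_lip" "0 \<le> deriv2_bound" "0 \<le> deriv2_holder_const"
    using profile_lip_nonneg deriv2_bound_nonneg c_pos T_pos by (auto simp: deriv2_holder_const_def)
  show ?thesis
    unfolding C2h_def
  proof (intro conjI allI impI)
    show "continuous_on {0..} (deriv2 g u)"
      using deriv2_holder[OF assms(1,2,3)] by (intro continuous_on_if_sqrt_holder[of _ _ deriv2_holder_const]) auto
    fix x :: real
    assume "0 \<le> x"
    show "(u has_real_derivative deriv1 g u x) (at x within {0..})"
      using mild_solution_has_derivative[OF assms(1,2) \<open>0 \<le> x\<close>] .
    show "(deriv1 g u has_real_derivative deriv2 g u x) (at x within {0..})"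
      using deriv1_has_derivative[OF assms(1,2) \<open>0 \<le> x\<close>] .
    show "\<bar>u x\<bar> \<le> norm_bound"
      using is_profileD(1,2)[OF u \<open>0 \<le> x\<close>] nonneg unfolding norm_bound_def by simp
    show "\<bar>deriv1 g u x\<bar> \<le> norm_bound"
      using abs_deriv1_le[OF assms(1) u \<open>0 \<le> x\<close>] nonneg T_pos unfolding norm_bound_def by simp
    show "\<bar>deriv2 g u x\<bar> \<le> norm_bound"
      using abs_deriv2_le[OF assms(1) u \<open>0 \<le> x\<close>] nonneg T_pos unfolding norm_bound_def by simp
    fix y :: real
    assume "0 \<le> y"
    have "deriv2_holder_const * sqrt \<bar>x - y\<bar> \<le> norm_bound * sqrt \<bar>x - y\<bar>"
      using nonneg T_pos unfolding norm_bound_def by (intro mult_right_mono) auto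
    then show "\<bar>deriv2 g u x - deriv2 g u y\<bar> \<le> norm_bound * sqrt \<bar>x - y\<bar>"
      using deriv2_holder[OF assms(1,2,3) \<open>0 \<le> x\<close> \<open>0 \<le> y\<close>] by simp
  qed
qed

lemma profile_pow4:
  assumes "is_profile \<phi>"
  shows "continuous_on {0..} (\<lambda>\<eta>. \<phi> \<eta> ^ 4)" "\<And>x. x \<ge> 0 \<Longrightarrow> 0 \<le> \<phi> x ^ 4 \<and> \<phi> x ^ 4 \<le> T ^ 4"
  using is_profileD[OF assms] by (auto intro!: continuous_intros power_mono)

lemma cont_bounded_pow4:
  assumes "is_profile \<phi>"
  shows "cont_bounded (T ^ 4) (\<lambda>\<eta>. \<phi> \<eta> ^ 4)"
  using profile_pow4[OF assms] by (simp add: cont_bounded_def)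

lemma is_source_E_conv_pow4:
  assumes "is_profile \<phi>"
  shows "is_source (E_conv_pow4 \<phi>)"
  unfolding is_source_def
  using E_conv_continuous_on[OF profile_pow4[OF assms]] E_conv_bounds[OF profile_pow4[OF assms]] by simp

lemma E_conv_pow4_holder:
  assumes "is_profile \<phi>" "0 \<le> x" "0 \<le> y"
  shows "\<bar>E_conv_pow4 \<phi> x - E_conv_pow4 \<phi> y\<bar> \<le> 4 * T ^ 4 * sqrt \<bar>x - y\<bar>"
  using E_conv_holder[OF profile_pow4[OF assms(1)] assms(2,3)] .

lemma mild_solution_E_conv_pow4:
  assumes "is_profile \<phi>" "mild_solution (E_conv_pow4 \<phi>) u"
  defines "g \<equiv> E_conv_pow4 \<phi>"
  shows "C2h u (deriv1 g u) (deriv2 g u) norm_bound" "u 0 = T" "\<And>y. 0 < y \<Longrightarrow> 0 < u y"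
    and "\<And>y. 0 < y \<Longrightarrow> ((\<lambda>\<eta>. E (y - \<eta>) * \<phi> \<eta> ^ 4) has_integral
      - (deriv2 g u y - c * deriv1 g u y - u y ^ 4)) {0..}"
proof -
  have g: "is_source g"
    unfolding g_def by (rule is_source_E_conv_pow4[OF assms(1)])
  have u: "is_profile u" "\<And>x. x \<ge> 0 \<Longrightarrow> u x = lsol (source g u) x"
    using assms(2) by (auto simp: mild_solution_def g_def)
  show "C2h u (deriv1 g u) (deriv2 g u) norm_bound"
    using g assms(2) E_conv_pow4_holder[OF assms(1)] unfolding g_def by (rule mild_solution_C2h)
  show "u 0 = T"
    using u(2)[of 0] lsol_0 by simp
  show "0 < u y" if "0 < y" for y
    using lsol_source_lower[OF g u(1), of y] u(2)[of y] T_pos that by (smt (verit) exp_gt_zero mult_pos_pos)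
  show "((\<lambda>\<eta>. E (y - \<eta>) * \<phi> \<eta> ^ 4) has_integral - (deriv2 g u y - c * deriv1 g u y - u y ^ 4)) {0..}"
    for y
    using E_conv_has_integral[OF cont_bounded_pow4[OF assms(1)], of y] by (simp add: deriv2_def g_def)
qed

primrec approx :: "nat \<Rightarrow> real \<Rightarrow> real" where
  "approx 0 = (\<lambda>_. 0)"
| "approx (Suc n) = sol (E_conv_pow4 (approx n))"

lemma is_profile_approx: "is_profile (approx n)"
  by (induction n) (simp_all add: is_profile_zero is_profile_sol is_source_E_conv_pow4)

lemma mild_solution_approx: "mild_solution (E_conv_pow4 (approx n)) (approx (Suc n))"
  by (simp add: mild_solution_sol is_source_E_conv_pow4 is_profile_approx)

lemma approx_mono:
  assumes "0 \<le> x"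
  shows "approx n x \<le> approx (Suc n) x"
  using assms
proof (induction n arbitrary: x)
  case 0
  then show ?case
    using is_profileD(1)[OF is_profile_approx[of 1]] by (simp del: approx.simps(2))
next
  case (Suc n)
  have "E_conv_pow4 (approx n) y \<le> E_conv_pow4 (approx (Suc n)) y" for y
    using Suc.IH is_profileD(1)[OF is_profile_approx]
    by (intro E_conv_mono[OF cont_bounded_pow4[OF is_profile_approx] cont_bounded_pow4[OF is_profile_approx]]
        power_mono) auto
  then have "sol (E_conv_pow4 (approx n)) x \<le> sol (E_conv_pow4 (approx (Suc n))) x"
    using Suc.prems by (intro sol_mono is_source_E_conv_pow4 is_profile_approx)
  then show ?case
    by simp
qed

definition approx_lim :: "real \<Rightarrow> real" where
  "approx_lim x = (SUP n. approx n x)"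

lemma approx_tendsto:
  assumes "0 \<le> x"
  shows "(\<lambda>n. approx n x) \<longlonglongrightarrow> approx_lim x"
  unfolding approx_lim_def
proof (rule LIMSEQ_incseq_SUP)
  show "bdd_above (range (\<lambda>n. approx n x))"
    using is_profileD(2)[OF is_profile_approx assms] by (auto intro!: bdd_aboveI[of _ T])
  show "incseq (\<lambda>n. approx n x)"
    using approx_mono[OF assms] by (simp add: incseq_SucI)
qed

lemma is_profile_approx_lim: "is_profile approx_lim"
  using is_profile_approx approx_tendsto by (rule is_profile_limit)

lemma mild_solution_approx_lim: "mild_solution (E_conv_pow4 approx_lim) approx_lim"
  unfolding mild_solution_def
proof (intro conjI allI impI is_profile_approx_lim)
  fix x :: real
  assume "0 \<le> x"
  have "(\<lambda>n. E_conv_pow4 (approx n) y) \<longlonglongrightarrow> E_conv_pow4 approx_lim y" if "0 \<le> y" for y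
    by (rule E_conv_tendsto[OF cont_bounded_pow4[OF is_profile_approx]])
       (auto intro: tendsto_intros approx_tendsto)
  moreover have "(\<lambda>n. approx (Suc n) y) \<longlonglongrightarrow> approx_lim y" if "0 \<le> y" for y
    using approx_tendsto[OF that] by (rule LIMSEQ_Suc)
  ultimately have "(\<lambda>n. lsol (source (E_conv_pow4 (approx n)) (approx (Suc n))) x)
      \<longlonglongrightarrow> lsol (source (E_conv_pow4 approx_lim) approx_lim) x"
    using lsol_source_tendsto[of "\<lambda>n. E_conv_pow4 (approx n)" "\<lambda>n. approx (Suc n)"]
      is_source_E_conv_pow4[OF is_profile_approx] is_profile_approx \<open>0 \<le> x\<close>
    by blast
  moreover have "approx (Suc n) x = lsol (source (E_conv_pow4 (approx n)) (approx (Suc n))) x" for n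
    using mild_solution_approx[of n] \<open>0 \<le> x\<close> by (simp add: mild_solution_def)
  ultimately show "approx_lim x = lsol (source (E_conv_pow4 approx_lim) approx_lim) x"
    using LIMSEQ_unique[OF approx_tendsto[OF \<open>0 \<le> x\<close>, THEN LIMSEQ_Suc]] by simp
qed

end

lemma C2h_zero: "0 \<le> K \<Longrightarrow> C2h (\<lambda>_. 0) (\<lambda>_. 0) (\<lambda>_. 0) K"
  unfolding C2h_def by auto

theorem theorem2p3:
  fixes T_M c :: real
  assumes "T_M > 0" and "c > 0"
  shows "\<exists>f f1 f2 K fs fs1 fs2 Ks.
     \<comment> \<open>the solution f\<close>
     C2h f f1 f2 K \<and>
     (\<forall>y>0. f y > 0) \<and> (\<forall>y\<ge>0. f y \<ge> 0) \<and> f 0 = T_M \<and>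
     (\<forall>y>0. ((\<lambda>\<eta>. E (y - \<eta>) * f \<eta> ^ 4) has_integral
                 (- (f2 y - c * f1 y - f y ^ 4))) {0..}) \<and>
     \<comment> \<open>the approximating sequence\<close>
     (\<forall>n. C2h (fs n) (fs1 n) (fs2 n) Ks) \<and>
     (\<forall>y\<ge>0. fs 0 y = 0) \<and>
     (\<forall>n y. y \<ge> 0 \<longrightarrow> 0 \<le> fs n y \<and> fs n y \<le> fs (Suc n) y \<and> fs (Suc n) y \<le> T_M) \<and>
     (\<forall>n y. n \<ge> 1 \<longrightarrow> y > 0 \<longrightarrow> fs n y > 0) \<and>
     (\<forall>n. fs (Suc n) 0 = T_M) \<and>
     (\<forall>n. \<forall>y>0. ((\<lambda>\<eta>. E (y - \<eta>) * fs n \<eta> ^ 4) has_integral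
                 (- (fs2 (Suc n) y - c * fs1 (Suc n) y - fs (Suc n) y ^ 4))) {0..}) \<and>
     (\<forall>y\<ge>0. (\<lambda>n. fs n y) \<longlonglongrightarrow> f y)"
proof -
  interpret quartic_bvp c "4 * T_M ^ 3 + 1" T_M
    using assms by unfold_locales (auto simp: add_pos_nonneg)
  define g where "g n = E_conv_pow4 (approx n)" for n
  define fs1 where "fs1 n = (case n of 0 \<Rightarrow> (\<lambda>_. 0) | Suc m \<Rightarrow> deriv1 (g m) (approx n))" for n
  define fs2 where "fs2 n = (case n of 0 \<Rightarrow> (\<lambda>_. 0) | Suc m \<Rightarrow> deriv2 (g m) (approx n))" for n
  note lim = mild_solution_E_conv_pow4[OF is_profile_approx_lim mild_solution_approx_lim]
  note step = mild_solution_E_conv_pow4[OF is_profile_approx mild_solution_approx, folded g_def]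
  show ?thesis
  proof (intro exI conjI allI impI)
    show "C2h approx_lim (deriv1 (E_conv_pow4 approx_lim) approx_lim) (deriv2 (E_conv_pow4 approx_lim) approx_lim)
        norm_bound"
      by (rule lim(1))
    show "C2h (approx n) (fs1 n) (fs2 n) norm_bound" for n
      using step(1) C2h_zero[OF norm_bound_nonneg] by (cases n) (simp_all add: fs1_def fs2_def)
    show "((\<lambda>\<eta>. E (y - \<eta>) * approx n \<eta> ^ 4) has_integral
        - (fs2 (Suc n) y - c * fs1 (Suc n) y - approx (Suc n) y ^ 4)) {0..}" if "0 < y" for n y
      using step(4)[OF that] by (simp add: fs1_def fs2_def)
    show "approx n y > 0" if "n \<ge> 1" "y > 0" for n y
      using step(3)[of y "n - 1"] that by simp
  qed (use lim(2-4) step(2) is_profileD(1,2)[OF is_profile_approx_lim] is_profileD(1,2)[OF is_profile_approx]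
      approx_mono approx_tendsto in \<open>auto simp del: approx.simps(2)\<close>)
qed

end
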